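(* In the gamma mixture of IBPs with parameters $0\le\alpha<1$, $\theta>-\alpha$ and $\gamma\sim\mathrm{Gamma}(a,b)$, given a sample $\mathbf Z^{(n)}$ with $K_n=k$ features, the posterior is $\gamma\mid\mathbf Z^{(n)}\sim\mathrm{Gamma}(a+k,b+g_n(\theta,\alpha))$. Moreover, as $m\to\infty$: if $\alpha=0$, $$\frac{K^{(n)}_m}{\log m}\,\Big|\,\mathbf Z^{(n)}\ \xrightarrow{d}\ \mathrm{Gamma}\Big(a+k,\frac{b+g_n(\theta,0)}{\theta}\Big);$$ if $\alpha\in(0,1)$, $$\frac{K^{(n)}_m}{m^\alpha}\,\Big|\,\mathbf Z^{(n)}\ \xrightarrow{d}\ \mathrm{Gamma}\Big(a+k,\{b+g_n(\theta,\alpha)\}\frac{\alpha\Gamma(\theta+\alpha)}{\Gamma(\theta+1)}\Big),$$ and these limits coincide with the laws of $\gamma\theta\mid\mathbf Z^{(n)}$ and $\gamma\Gamma(\theta+1)/\{\alpha\Gamma(\theta+\alpha)\}\mid\mathbf Z^{(n)}$ respectively.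
   Context: $(x)_m=\Gamma(x+m)/\Gamma(x)$; $g_n(\theta,\alpha)=\sum_{i=1}^n\frac{(\theta+\alpha)_{i-1}}{(\theta+1)_{i-1}}$. The IBP with parameters $(\gamma,\alpha,\theta)$ is the feature model whose exchangeable feature probability function (probability of any given ordered feature allocation of $[n]$ into $k$ nonempty sets of sizes $m_1,\dots,m_k$) is $V_{n,k}\prod_{\ell=1}^k(1-\alpha)_{m_\ell-1}(\theta+\alpha)_{n-m_\ell}$ with $V_{n,k}=\frac1{k!}\{\gamma/(\theta+1)_{n-1}\}^ke^{-\gamma g_n(\theta,\alpha)}$. The gamma mixture of IBPs takes $\gamma\sim\mathrm{Gamma}(a,b)$ (shape $a>0$, rate $b>0$) and, conditionally on $\gamma$, data from the IBP. $K_n$ is the number of distinct features among the first $n$ individuals; $K^{(n)}_m$ is the number of features displayed by individuals $n+1,\dots,n+m$ not among those observed in $\mathbf Z^{(n)}$. *)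

theory Defs
  imports "HOL-Probability.Probability" "HOL-Library.Multiset"
begin

definition g_fun :: "nat \<Rightarrow> real \<Rightarrow> real \<Rightarrow> real" where
  "g_fun n \<theta> \<alpha> = (\<Sum>i=1..n. pochhammer (\<theta> + \<alpha>) (i - 1) / pochhammer (\<theta> + 1) (i - 1))"

definition gamma_density :: "real \<Rightarrow> real \<Rightarrow> real \<Rightarrow> real" where
  "gamma_density a b x = (if x > 0 then b powr a * x powr (a - 1) * exp (- b * x) / Gamma a else 0)"

definition gamma_measure :: "real \<Rightarrow> real \<Rightarrow> real measure" where
  "gamma_measure a b = density lborel (\<lambda>x. ennreal (gamma_density a b x))"

text \<open>Ordered feature allocations of $[N]=\{1..N\}$: lists of nonempty subsets of $[N]$
  (blocks may repeat).\<close>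
definition ofa :: "nat \<Rightarrow> nat set list set" where
  "ofa N = {l. \<forall>B\<in>set l. B \<noteq> {} \<and> B \<subseteq> {1..N}}"

definition ibp_efpf :: "real \<Rightarrow> real \<Rightarrow> real \<Rightarrow> nat \<Rightarrow> nat set list \<Rightarrow> real" where
  "ibp_efpf \<gamma> \<alpha> \<theta> N l =
     (1 / fact (length l)) * (\<gamma> / pochhammer (\<theta> + 1) (N - 1)) ^ length l
       * exp (- \<gamma> * g_fun N \<theta> \<alpha>)
       * (\<Prod>B\<leftarrow>l. pochhammer (1 - \<alpha>) (card B - 1) * pochhammer (\<theta> + \<alpha>) (N - card B))"

definition restr :: "nat \<Rightarrow> nat set list \<Rightarrow> nat set multiset" where
  "restr n l = mset (filter (\<lambda>B. B \<noteq> {}) (map (\<lambda>B. B \<inter> {1..n}) l))"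

definition new_feats :: "nat \<Rightarrow> nat set list \<Rightarrow> nat" where
  "new_feats n l = length (filter (\<lambda>B. B \<inter> {1..n} = {}) l)"

definition ibp_lik :: "real \<Rightarrow> real \<Rightarrow> real \<Rightarrow> nat \<Rightarrow> nat set multiset \<Rightarrow> real" where
  "ibp_lik \<gamma> \<alpha> \<theta> n z = (\<Sum>l\<in>{l. mset l = z}. ibp_efpf \<gamma> \<alpha> \<theta> n l)"

definition posterior :: "real \<Rightarrow> real \<Rightarrow> real \<Rightarrow> real \<Rightarrow> nat \<Rightarrow> nat set multiset \<Rightarrow> real measure" where
  "posterior a b \<alpha> \<theta> n z =
     density lborel (\<lambda>\<gamma>. ennreal (ibp_lik \<gamma> \<alpha> \<theta> n z * gamma_density a b \<gamma>
        / (\<integral>t. ibp_lik t \<alpha> \<theta> n z * gamma_density a b t \<partial>lborel)))"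

text \<open>Joint mixture probability that $\mathbf Z^{(n)} = z$ and $K^{(n)}_m \in J$, computed from
  the model on $[n+m]$.\<close>
definition mix_joint :: "real \<Rightarrow> real \<Rightarrow> real \<Rightarrow> real \<Rightarrow> nat \<Rightarrow> nat \<Rightarrow> nat set multiset \<Rightarrow> nat set \<Rightarrow> real" where
  "mix_joint a b \<alpha> \<theta> n m z J =
     (\<integral>\<gamma>. (\<Sum>\<^sub>\<infinity>l\<in>{l\<in>ofa (n + m). restr n l = z \<and> new_feats n l \<in> J}.
              ibp_efpf \<gamma> \<alpha> \<theta> (n + m) l) * gamma_density a b \<gamma> \<partial>lborel)"

definition cond_K :: "real \<Rightarrow> real \<Rightarrow> real \<Rightarrow> real \<Rightarrow> nat \<Rightarrow> nat \<Rightarrow> nat set multiset \<Rightarrow> nat \<Rightarrow> real" where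
  "cond_K a b \<alpha> \<theta> n m z j = mix_joint a b \<alpha> \<theta> n m z {j} / mix_joint a b \<alpha> \<theta> n m z UNIV"

definition cond_law_scaled :: "real \<Rightarrow> real \<Rightarrow> real \<Rightarrow> real \<Rightarrow> nat \<Rightarrow> nat \<Rightarrow> nat set multiset \<Rightarrow> real \<Rightarrow> real measure" where
  "cond_law_scaled a b \<alpha> \<theta> n m z c =
     distr (density (count_space UNIV) (\<lambda>j. ennreal (cond_K a b \<alpha> \<theta> n m z j))) borel
       (\<lambda>j. real j / c)"

end

theory Submission
  imports Defs "HOL-Combinatorics.Multiset_Permutations" "HOL-Real_Asymp.Real_Asymp"
begin

text \<open>
  Conditionally on \<open>\<gamma>\<close>, an IBP allocation of \<open>{1..n+m}\<close> that induces \<open>z\<close> on \<open>{1..n}\<close> consists of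
  the \<open>k\<close> observed features, each extended by an arbitrary set of new individuals, together with
  the features displayed only by new individuals. Summing the EFPF over all such allocations with
  \<open>j\<close> new features gives the likelihood of \<open>z\<close> times the Poisson probability of \<open>j\<close> with mean
  \<open>\<gamma> (g (n+m) - g n)\<close>. As a function of \<open>\<gamma>\<close> the likelihood is proportional to
  \<open>\<gamma>^k exp (- \<gamma> g n)\<close>, so the Gamma prior is conjugate, and the number of new features given
  the sample is a Poisson mixture over the posterior.

  The increments of \<open>g\<close> are \<open>(\<theta>+\<alpha>)\<^sub>N / (\<theta>+1)\<^sub>N\<close>, which behave like \<open>\<theta> / N\<close> for \<open>\<alpha> = 0\<close> and
  like \<open>\<Gamma>(\<theta>+1) / \<Gamma>(\<theta>+\<alpha>) N powr (\<alpha> - 1)\<close> otherwise; by Stolz-Cesaro,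
  \<open>g (n+m) - g n \<sim> L c m\<close> with \<open>c m = ln m\<close>, resp. \<open>m powr \<alpha>\<close>. By Chebyshev's inequality a
  Poisson variable with mean \<open>\<gamma> L c m\<close>, divided by \<open>c m\<close>, concentrates at \<open>\<gamma> L\<close>, and dominated
  convergence in \<open>\<gamma>\<close> turns this into convergence of distribution functions to those of \<open>\<gamma> L\<close>
  under the posterior.
\<close>

section \<open>Feature weights\<close>

definition block_weight :: "real \<Rightarrow> real \<Rightarrow> nat \<Rightarrow> nat set \<Rightarrow> real" where
  "block_weight \<alpha> \<theta> N B = pochhammer (1 - \<alpha>) (card B - 1) * pochhammer (\<theta> + \<alpha>) (N - card B)"

lemma block_weight_pos: "\<alpha> < 1 \<Longrightarrow> \<theta> + \<alpha> > 0 \<Longrightarrow> block_weight \<alpha> \<theta> N B > 0"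
  unfolding block_weight_def by (intro mult_pos_pos pochhammer_pos) auto

lemma block_weight_singleton: "block_weight \<alpha> \<theta> N {x} = pochhammer (\<theta> + \<alpha>) (N - 1)"
  by (simp add: block_weight_def)

text \<open>Individual \<open>N + 1\<close> either lacks or displays the feature \<open>B\<close>.\<close>
lemma block_weight_Suc:
  assumes "finite B" "B \<noteq> {}" "card B \<le> N" "x \<notin> B"
  shows "block_weight \<alpha> \<theta> (Suc N) B + block_weight \<alpha> \<theta> (Suc N) (insert x B)
           = (\<theta> + real N) * block_weight \<alpha> \<theta> N B"
proof -
  obtain c where c: "card B = Suc c" using assms(1,2) by (cases "card B") auto
  have "Suc N - card B = Suc (N - card B)" "card (insert x B) - 1 = Suc c"
       "Suc N - card (insert x B) = N - card B" "real (N - card B) = real N - real (Suc c)"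
    using assms c by auto
  then show ?thesis using c by (simp add: block_weight_def pochhammer_Suc algebra_simps)
qed

lemma sum_Pow_insert:
  assumes "finite X" "x \<notin> X"
  shows "(\<Sum>C\<in>Pow (insert x X). f C) = (\<Sum>C\<in>Pow X. f C + f (insert x C))"
proof -
  have inj: "inj_on (insert x) (Pow X)"
    unfolding inj_on_def by (metis PowD assms(2) in_mono insert_ident)
  have "(\<Sum>C\<in>Pow (insert x X). f C) = (\<Sum>C\<in>Pow X. f C) + (\<Sum>C\<in>insert x ` Pow X. f C)"
    unfolding Pow_insert using assms by (intro sum.union_disjoint) auto
  then show ?thesis by (simp add: sum.reindex[OF inj] sum.distrib)
qed

lemma Pow_greaterThanAtMost_Suc: "Pow {n<..Suc N} = Pow (insert (Suc N) {n<..N})" if "n \<le> N"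
  using that by auto

lemma sum_block_weight_extend:
  assumes "A \<subseteq> {1..n}" "A \<noteq> {}"
  shows "(\<Sum>C\<in>Pow {n<..n+m}. block_weight \<alpha> \<theta> (n+m) (A \<union> C))
           = block_weight \<alpha> \<theta> n A * pochhammer (\<theta> + real n) m"
proof (induction m)
  case (Suc m)
  have step: "block_weight \<alpha> \<theta> (Suc (n+m)) (A \<union> C) + block_weight \<alpha> \<theta> (Suc (n+m)) (insert (Suc (n+m)) (A \<union> C))
      = (\<theta> + real (n+m)) * block_weight \<alpha> \<theta> (n+m) (A \<union> C)" if "C \<subseteq> {n<..n+m}" for C
  proof (rule block_weight_Suc)
    have sub: "A \<union> C \<subseteq> {1..n+m}" using that assms by auto
    then show "finite (A \<union> C)" by (rule finite_subset) simp
    show "card (A \<union> C) \<le> n + m" using card_mono[OF _ sub] by simp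
  qed (use that assms in auto)
  have "(\<Sum>C\<in>Pow {n<..n+Suc m}. block_weight \<alpha> \<theta> (n+Suc m) (A \<union> C))
      = (\<theta> + real (n+m)) * (\<Sum>C\<in>Pow {n<..n+m}. block_weight \<alpha> \<theta> (n+m) (A \<union> C))"
    by (simp add: Pow_greaterThanAtMost_Suc sum_Pow_insert step sum_distrib_left)
  also have "\<dots> = block_weight \<alpha> \<theta> n A * pochhammer (\<theta> + real n) (Suc m)"
    unfolding Suc.IH by (simp add: pochhammer_Suc algebra_simps)
  finally show ?case .
qed simp

lemma g_fun_Suc: "g_fun (Suc N) \<theta> \<alpha> = g_fun N \<theta> \<alpha> + pochhammer (\<theta> + \<alpha>) N / pochhammer (\<theta> + 1) N"
  unfolding g_fun_def by simp

lemma pochhammer_Suc_pred: "N > 0 \<Longrightarrow> pochhammer x N = (x + of_nat (N - 1)) * pochhammer x (N - 1)"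
  by (cases N) (simp_all add: pochhammer_Suc mult.commute)

lemma sum_block_weight_new:
  assumes "\<theta> + 1 > 0"
  shows "(\<Sum>C\<in>Pow {n<..n+m} - {{}}. block_weight \<alpha> \<theta> (n+m) C)
           = pochhammer (\<theta> + 1) (n + m - 1) * (g_fun (n+m) \<theta> \<alpha> - g_fun n \<theta> \<alpha>)"
proof (induction m)
  case (Suc m)
  define N where "N = n + m"
  have step: "block_weight \<alpha> \<theta> (Suc N) C + block_weight \<alpha> \<theta> (Suc N) (insert (Suc N) C)
      = (\<theta> + real N) * block_weight \<alpha> \<theta> N C" if "C \<subseteq> {n<..N}" "C \<noteq> {}" for C
  proof (rule block_weight_Suc)
    have sub: "C \<subseteq> {1..N}" using that by auto
    then show "finite C" by (rule finite_subset) simp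
    show "card C \<le> N" using card_mono[OF _ sub] by simp
  qed (use that in auto)
  have "(\<Sum>C\<in>Pow {n<..Suc N} - {{}}. block_weight \<alpha> \<theta> (Suc N) C)
      = (\<Sum>C\<in>Pow {n<..N} - {{}}. block_weight \<alpha> \<theta> (Suc N) C + block_weight \<alpha> \<theta> (Suc N) (insert (Suc N) C))
        + block_weight \<alpha> \<theta> (Suc N) {Suc N}"
    by (simp add: N_def Pow_greaterThanAtMost_Suc sum_diff1 sum_Pow_insert)
  also have "\<dots> = (\<theta> + real N) * (\<Sum>C\<in>Pow {n<..N} - {{}}. block_weight \<alpha> \<theta> N C)
        + pochhammer (\<theta> + \<alpha>) N"
    unfolding sum_distrib_left block_weight_singleton by (auto intro!: sum.cong step)
  also have "\<dots> = (\<theta> + real N) * (pochhammer (\<theta> + 1) (N - 1) * (g_fun N \<theta> \<alpha> - g_fun n \<theta> \<alpha>))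
        + pochhammer (\<theta> + \<alpha>) N"
    unfolding Suc.IH[folded N_def] ..
  also have "\<dots> = pochhammer (\<theta> + 1) N * (g_fun (Suc N) \<theta> \<alpha> - g_fun n \<theta> \<alpha>)"
  proof (cases "N = 0")
    case False
    have "pochhammer (\<theta> + 1) N \<noteq> 0" using assms by (auto simp: pochhammer_eq_0_iff)
    then show ?thesis using pochhammer_Suc_pred[of N "\<theta> + 1"] False
      by (simp add: g_fun_Suc field_simps)
  qed (simp add: N_def g_fun_Suc)
  finally show ?case by (simp add: N_def)
qed simp

section \<open>Extensions of an observed allocation\<close>

definition extensions :: "nat \<Rightarrow> nat \<Rightarrow> nat set multiset \<Rightarrow> nat \<Rightarrow> nat set list set" where
  "extensions n N z j = {l \<in> ofa N. restr n l = z \<and> new_feats n l = j}"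

definition extension_sum :: "nat \<Rightarrow> nat \<Rightarrow> (nat set \<Rightarrow> real) \<Rightarrow> nat set multiset \<Rightarrow> nat \<Rightarrow> real" where
  "extension_sum n N w z j = (\<Sum>l\<in>extensions n N z j. prod_list (map w l))"

definition extended_block_sum :: "nat \<Rightarrow> nat \<Rightarrow> (nat set \<Rightarrow> real) \<Rightarrow> nat set \<Rightarrow> real" where
  "extended_block_sum n N w A = (\<Sum>C\<in>Pow {n<..N}. w (A \<union> C))"

definition new_block_sum :: "nat \<Rightarrow> nat \<Rightarrow> (nat set \<Rightarrow> real) \<Rightarrow> real" where
  "new_block_sum n N w = (\<Sum>C\<in>Pow {n<..N} - {{}}. w C)"

definition perm_prod_sum :: "('a \<Rightarrow> real) \<Rightarrow> 'a multiset \<Rightarrow> real" where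
  "perm_prod_sum e z = (\<Sum>l\<in>permutations_of_multiset z. prod_list (map e l))"

lemma perm_prod_sum_empty [simp]: "perm_prod_sum e {#} = 1"
  by (simp add: perm_prod_sum_def)

lemma perm_prod_sum_rec:
  assumes "z \<noteq> {#}"
  shows "perm_prod_sum e z = (\<Sum>A\<in>set_mset z. e A * perm_prod_sum e (z - {#A#}))"
proof -
  have "perm_prod_sum e z
      = (\<Sum>A\<in>set_mset z. \<Sum>l\<in>(#) A ` permutations_of_multiset (z - {#A#}). prod_list (map e l))"
    unfolding perm_prod_sum_def permutations_of_multiset_nonempty[OF assms]
    by (rule sum.UNION_disjoint) auto
  then show ?thesis by (simp add: sum.reindex perm_prod_sum_def sum_distrib_left)
qed

lemma restr_Nil [simp]: "restr n [] = {#}"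
  by (simp add: restr_def)

lemma restr_Cons:
  "restr n (B # l) = (if B \<inter> {1..n} = {} then restr n l else add_mset (B \<inter> {1..n}) (restr n l))"
  by (simp add: restr_def)

lemma new_feats_Nil [simp]: "new_feats n [] = 0"
  by (simp add: new_feats_def)

lemma new_feats_Cons:
  "new_feats n (B # l) = (if B \<inter> {1..n} = {} then Suc (new_feats n l) else new_feats n l)"
  by (simp add: new_feats_def)

lemma length_eq_size_restr_add_new_feats: "length l = size (restr n l) + new_feats n l"
  by (induction l) (auto simp: restr_Cons new_feats_Cons)

lemma length_extensions: "l \<in> extensions n N z j \<Longrightarrow> length l = size z + j"
  unfolding extensions_def using length_eq_size_restr_add_new_feats by auto

lemma finite_extensions: "finite (extensions n N z j)"
proof (rule finite_subset)
  show "extensions n N z j \<subseteq> {l. set l \<subseteq> Pow {1..N} \<and> length l = size z + j}"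
    using length_extensions by (auto simp: extensions_def ofa_def)
qed (simp add: finite_lists_length_eq)

lemma Nil_in_extensions_iff: "[] \<in> extensions n N z j \<longleftrightarrow> z = {#} \<and> j = 0"
  by (auto simp: extensions_def ofa_def)

lemma extensions_empty_0: "extensions n N {#} 0 = {[]}"
  using length_extensions[of _ n N "{#}" 0] Nil_in_extensions_iff[of n N "{#}" 0] by auto

lemma Cons_in_extensions_iff:
  "B # l \<in> extensions n N z j \<longleftrightarrow> B \<noteq> {} \<and> B \<subseteq> {1..N} \<and>
     (if B \<inter> {1..n} = {} then j > 0 \<and> l \<in> extensions n N z (j - 1)
      else B \<inter> {1..n} \<in># z \<and> l \<in> extensions n N (z - {#B \<inter> {1..n}#}) j)"
proof -
  have "add_mset A X = z \<longleftrightarrow> A \<in># z \<and> X = z - {#A#}" for A X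
    by (metis add_mset_remove_trivial insert_DiffM union_single_eq_member)
  then show ?thesis unfolding extensions_def ofa_def by (auto simp: restr_Cons new_feats_Cons)
qed

lemma sum_prod_list_by_head:
  fixes w :: "'a \<Rightarrow> 'b::comm_semiring_1"
  assumes "finite S" "finite H" "\<And>l. l \<in> S \<Longrightarrow> l \<noteq> [] \<and> hd l \<in> H"
  shows "(\<Sum>l\<in>S. prod_list (map w l)) = (\<Sum>B\<in>H. w B * (\<Sum>t\<in>{t. B # t \<in> S}. prod_list (map w t)))"
proof -
  have tails: "finite {t. B # t \<in> S}" for B
    by (rule finite_subset[OF _ finite_imageI[OF assms(1), of tl]]) force
  have S: "S = (\<lambda>(B, t). B # t) ` (SIGMA B:H. {t. B # t \<in> S})"
    using assms(3) by (auto simp: image_iff) (metis list.collapse)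
  have "inj_on (\<lambda>(B, t). B # t) (SIGMA B:H. {t. B # t \<in> S})"
    by (auto simp: inj_on_def)
  then show ?thesis
    by (subst S) (simp add: sum.reindex sum_distrib_left sum.Sigma[OF assms(2)] tails split_def)
qed

lemma bij_betw_union_split:
  fixes n N :: nat
  assumes "\<A> \<subseteq> Pow {1..n}" "n \<le> N"
  shows "bij_betw (\<lambda>(A, C). A \<union> C) (\<A> \<times> Pow {n<..N}) {B. B \<subseteq> {1..N} \<and> B \<inter> {1..n} \<in> \<A>}"
proof (rule bij_betwI[where g = "\<lambda>B. (B \<inter> {1..n}, B \<inter> {n<..N})"])
  have split: "A \<union> C \<subseteq> {1..N} \<and> (A \<union> C) \<inter> {1..n} = A \<and> (A \<union> C) \<inter> {n<..N} = C"
    if "A \<in> \<A>" "C \<subseteq> {n<..N}" for A C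
  proof -
    have "A \<subseteq> {1..n}" using that assms(1) by auto
    then show ?thesis using that assms(2) by auto
  qed
  show "(\<lambda>(A, C). A \<union> C) \<in> \<A> \<times> Pow {n<..N} \<rightarrow> {B. B \<subseteq> {1..N} \<and> B \<inter> {1..n} \<in> \<A>}"
    using split by fastforce
  show "(\<lambda>B. (B \<inter> {1..n}, B \<inter> {n<..N})) ((\<lambda>(A, C). A \<union> C) p) = p"
    if "p \<in> \<A> \<times> Pow {n<..N}" for p
    using that split by fastforce
  show "(\<lambda>(A, C). A \<union> C) (B \<inter> {1..n}, B \<inter> {n<..N}) = B" if "B \<in> {B. B \<subseteq> {1..N} \<and> B \<inter> {1..n} \<in> \<A>}" for B
    using that by auto
qed auto

lemma subset_greaterThanAtMost_iff:
  fixes n N :: nat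
  shows "B \<subseteq> {n<..N} \<longleftrightarrow> B \<subseteq> {1..N} \<and> B \<inter> {1..n} = {}"
proof -
  have "{n<..N} = {1..N} - {1..n}" by auto
  then show ?thesis by auto
qed

lemma extensions_Cons_new:
  assumes "B \<noteq> {}" "B \<subseteq> {n<..N}"
  shows "{t. B # t \<in> extensions n N z j} = (if j > 0 then extensions n N z (j - 1) else {})"
  using assms by (auto simp: Cons_in_extensions_iff subset_greaterThanAtMost_iff)

lemma extensions_Cons_old:
  assumes "A \<noteq> {}" "A \<subseteq> {1..n}" "C \<subseteq> {n<..N}" "n \<le> N"
  shows "{t. (A \<union> C) # t \<in> extensions n N z j} = (if A \<in># z then extensions n N (z - {#A#}) j else {})"
proof -
  have "A \<union> C \<noteq> {}" "A \<union> C \<subseteq> {1..N}" "(A \<union> C) \<inter> {1..n} = A"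
    using assms by auto
  then show ?thesis using assms(1) by (auto simp: Cons_in_extensions_iff)
qed

text \<open>Split off the first feature of the allocation: it is either new, or an old feature \<open>A\<close> of the
  sample extended by a subset of the new individuals.\<close>
lemma extension_sum_rec:
  assumes "n \<le> N" and z: "\<forall>A\<in>#z. A \<noteq> {} \<and> A \<subseteq> {1..n}" and "\<not> (z = {#} \<and> j = 0)"
  shows "extension_sum n N w z j
           = (if j > 0 then new_block_sum n N w * extension_sum n N w z (j - 1) else 0)
             + (\<Sum>A\<in>set_mset z. extended_block_sum n N w A * extension_sum n N w (z - {#A#}) j)"
proof -
  define tails where "tails B = (\<Sum>t\<in>{t. B # t \<in> extensions n N z j}. prod_list (map w t))" for B
  define new where "new = Pow {n<..N} - {{}}"
  define old where "old = {B. B \<subseteq> {1..N} \<and> B \<inter> {1..n} \<in> set_mset z}"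
  have "finite new" "finite old" by (auto simp: new_def old_def)
  moreover have "l \<noteq> [] \<and> hd l \<in> new \<union> old" if "l \<in> extensions n N z j" for l
    using that assms(3) z
    by (cases l) (auto simp: Nil_in_extensions_iff Cons_in_extensions_iff new_def old_def
        subset_greaterThanAtMost_iff split: if_splits)
  ultimately have "extension_sum n N w z j = (\<Sum>B\<in>new \<union> old. w B * tails B)"
    unfolding extension_sum_def tails_def by (intro sum_prod_list_by_head finite_extensions) auto
  also have "\<dots> = (\<Sum>B\<in>new. w B * tails B) + (\<Sum>B\<in>old. w B * tails B)"
    using z by (intro sum.union_disjoint \<open>finite new\<close> \<open>finite old\<close>)
      (auto simp: new_def old_def subset_greaterThanAtMost_iff)
  also have "(\<Sum>B\<in>new. w B * tails B)
      = (if j > 0 then new_block_sum n N w * extension_sum n N w z (j - 1) else 0)"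
  proof -
    have "tails B = (if j > 0 then extension_sum n N w z (j - 1) else 0)" if "B \<in> new" for B
      using that by (simp add: tails_def new_def extensions_Cons_new extension_sum_def)
    then show ?thesis by (simp add: new_block_sum_def new_def sum_distrib_right)
  qed
  also have "(\<Sum>B\<in>old. w B * tails B)
      = (\<Sum>(A, C)\<in>set_mset z \<times> Pow {n<..N}. w (A \<union> C) * tails (A \<union> C))"
    using bij_betw_union_split[of "set_mset z" n N] z assms(1)
    by (subst sum.reindex_bij_betw[symmetric]) (auto simp: old_def split_def)
  also have "\<dots> = (\<Sum>A\<in>set_mset z. extended_block_sum n N w A * extension_sum n N w (z - {#A#}) j)"
  proof -
    have "tails (A \<union> C) = extension_sum n N w (z - {#A#}) j" if "A \<in># z" "C \<subseteq> {n<..N}" for A C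
      using that z assms(1) by (simp add: tails_def extensions_Cons_old extension_sum_def)
    then show ?thesis
      by (simp add: sum.cartesian_product[symmetric] extended_block_sum_def sum_distrib_right)
  qed
  finally show ?thesis .
qed

lemma binomial_add_Pascal:
  assumes "k + j > 0"
  shows "real ((k + j) choose j)
           = (if j > 0 then real ((k + j - 1) choose (j - 1)) else 0)
             + (if k > 0 then real ((k - 1 + j) choose j) else 0)"
proof (cases "j > 0 \<and> k > 0")
  case True
  then have "(k + j) choose j = ((k + j - 1) choose (j - 1)) + ((k + j - 1) choose j)"
    by (intro choose_reduce_nat) auto
  then show ?thesis using True by simp
qed (use assms in auto)

lemma extension_sum_closed:
  assumes "n \<le> N" and "\<forall>A\<in>#z. A \<noteq> {} \<and> A \<subseteq> {1..n}"
  shows "extension_sum n N w z j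
           = real ((size z + j) choose j) * perm_prod_sum (extended_block_sum n N w) z * new_block_sum n N w ^ j"
  using assms(2)
proof (induction "size z + j" arbitrary: z j rule: less_induct)
  case less
  define P where "P = perm_prod_sum (extended_block_sum n N w)"
  define D where "D = new_block_sum n N w"
  show ?case
  proof (cases "z = {#} \<and> j = 0")
    case True
    then show ?thesis by (simp add: extension_sum_def extensions_empty_0)
  next
    case False
    have new: "(if j > 0 then D * extension_sum n N w z (j - 1) else 0)
        = (if j > 0 then real ((size z + j - 1) choose (j - 1)) * P z * D ^ j else 0)"
      using less.hyps[of z "j - 1"] less.prems by (cases j) (auto simp: P_def D_def)
    have old: "(\<Sum>A\<in>set_mset z. extended_block_sum n N w A * extension_sum n N w (z - {#A#}) j)
        = (if size z > 0 then real ((size z - 1 + j) choose j) * P z * D ^ j else 0)"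
    proof (cases "z = {#}")
      case False
      have "extension_sum n N w (z - {#A#}) j = real ((size z - 1 + j) choose j) * P (z - {#A#}) * D ^ j"
        if "A \<in># z" for A
      proof -
        have "size z > 0" using that by (metis gr0I size_eq_0_iff_empty empty_iff set_mset_empty)
        then show ?thesis
          using that less.hyps[of "z - {#A#}" j] less.prems
          by (auto simp: P_def D_def size_Diff_submset dest: in_diffD)
      qed
      then show ?thesis
        using False perm_prod_sum_rec[OF False, of "extended_block_sum n N w"]
        by (simp add: P_def sum_distrib_left sum_distrib_right ac_simps)
    qed simp
    have rec: "extension_sum n N w z j = (if j > 0 then D * extension_sum n N w z (j - 1) else 0)
        + (\<Sum>A\<in>set_mset z. extended_block_sum n N w A * extension_sum n N w (z - {#A#}) j)"
      unfolding D_def by (rule extension_sum_rec[OF assms(1) less.prems False])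
    have pos: "size z + j > 0" using False by (cases z) auto
    show ?thesis
      using False unfolding P_def[symmetric] D_def[symmetric] rec new old binomial_add_Pascal[OF pos]
      by (simp add: algebra_simps)
  qed
qed

section \<open>Factorisation of the likelihood\<close>

lemma ibp_efpf_eq: "ibp_efpf \<gamma> \<alpha> \<theta> N l = 1 / fact (length l) * (\<gamma> / pochhammer (\<theta> + 1) (N - 1)) ^ length l
   * exp (- \<gamma> * g_fun N \<theta> \<alpha>) * prod_list (map (block_weight \<alpha> \<theta> N) l)"
  unfolding ibp_efpf_def block_weight_def by simp

lemma prod_list_block_weight_pos:
  "\<alpha> < 1 \<Longrightarrow> \<theta> + \<alpha> > 0 \<Longrightarrow> prod_list (map (block_weight \<alpha> \<theta> N) l) > 0"
  using block_weight_pos by (induction l) auto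

lemma ibp_efpf_nonneg:
  assumes "\<gamma> \<ge> 0" "\<alpha> < 1" "\<theta> + \<alpha> > 0"
  shows "ibp_efpf \<gamma> \<alpha> \<theta> N l \<ge> 0"
proof -
  have "pochhammer (\<theta> + 1) (N - 1) > 0" using assms by (intro pochhammer_pos) auto
  moreover note prod_list_block_weight_pos[OF assms(2,3), of N l]
  ultimately show ?thesis unfolding ibp_efpf_eq using assms by simp
qed

definition lik_const :: "real \<Rightarrow> real \<Rightarrow> nat \<Rightarrow> nat set multiset \<Rightarrow> real" where
  "lik_const \<alpha> \<theta> n z
     = perm_prod_sum (block_weight \<alpha> \<theta> n) z / (fact (size z) * pochhammer (\<theta> + 1) (n - 1) ^ size z)"

lemma lik_const_pos:
  assumes "\<alpha> < 1" "\<theta> + \<alpha> > 0"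
  shows "lik_const \<alpha> \<theta> n z > 0"
proof -
  have "perm_prod_sum (block_weight \<alpha> \<theta> n) z > 0"
    unfolding perm_prod_sum_def using prod_list_block_weight_pos[OF assms] by (intro sum_pos) auto
  moreover have "pochhammer (\<theta> + 1) (n - 1) > 0" using assms by (intro pochhammer_pos) auto
  ultimately show ?thesis unfolding lik_const_def by simp
qed

lemma length_permutations_of_multiset: "l \<in> permutations_of_multiset z \<Longrightarrow> length l = size z"
  by (metis permutations_of_multisetD size_mset)

lemma ibp_lik_eq: "ibp_lik \<gamma> \<alpha> \<theta> n z = lik_const \<alpha> \<theta> n z * \<gamma> ^ size z * exp (- \<gamma> * g_fun n \<theta> \<alpha>)"
proof -
  have "ibp_lik \<gamma> \<alpha> \<theta> n z = (\<Sum>l\<in>permutations_of_multiset z. ibp_efpf \<gamma> \<alpha> \<theta> n l)"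
    unfolding ibp_lik_def permutations_of_multiset_def ..
  also have "\<dots> = (\<Sum>l\<in>permutations_of_multiset z. 1 / fact (size z) * (\<gamma> / pochhammer (\<theta> + 1) (n - 1)) ^ size z
     * exp (- \<gamma> * g_fun n \<theta> \<alpha>) * prod_list (map (block_weight \<alpha> \<theta> n) l))"
    by (intro sum.cong) (simp_all add: ibp_efpf_eq length_permutations_of_multiset)
  also have "\<dots> = 1 / fact (size z) * (\<gamma> / pochhammer (\<theta> + 1) (n - 1)) ^ size z
     * exp (- \<gamma> * g_fun n \<theta> \<alpha>) * perm_prod_sum (block_weight \<alpha> \<theta> n) z"
    by (simp add: perm_prod_sum_def sum_distrib_left)
  finally show ?thesis by (simp add: lik_const_def power_divide)
qed

lemma perm_prod_sum_extended_block_weight: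
  assumes "\<forall>A\<in>#z. A \<noteq> {} \<and> A \<subseteq> {1..n}"
  shows "perm_prod_sum (extended_block_sum n (n+m) (block_weight \<alpha> \<theta> (n+m))) z
           = pochhammer (\<theta> + real n) m ^ size z * perm_prod_sum (block_weight \<alpha> \<theta> n) z"
proof -
  have "prod_list (map (extended_block_sum n (n+m) (block_weight \<alpha> \<theta> (n+m))) l)
      = pochhammer (\<theta> + real n) m ^ size z * prod_list (map (block_weight \<alpha> \<theta> n) l)"
    if "l \<in> permutations_of_multiset z" for l
  proof -
    have "set l \<subseteq> set_mset z"
      using that by (auto dest: permutations_of_multisetD)
    then have "prod_list (map (extended_block_sum n (n+m) (block_weight \<alpha> \<theta> (n+m))) l)
        = pochhammer (\<theta> + real n) m ^ length l * prod_list (map (block_weight \<alpha> \<theta> n) l)"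
      using assms unfolding extended_block_sum_def
      by (induction l) (auto simp: sum_block_weight_extend)
    then show ?thesis using that by (simp add: length_permutations_of_multiset)
  qed
  then show ?thesis by (simp add: perm_prod_sum_def sum_distrib_left)
qed

definition poisson_prob :: "real \<Rightarrow> nat \<Rightarrow> real" where
  "poisson_prob \<mu> j = exp (- \<mu>) * \<mu> ^ j / fact j"

definition g_incr :: "nat \<Rightarrow> nat \<Rightarrow> real \<Rightarrow> real \<Rightarrow> real" where
  "g_incr n m \<theta> \<alpha> = g_fun (n + m) \<theta> \<alpha> - g_fun n \<theta> \<alpha>"

lemma g_fun_term_pos:
  "(\<alpha>::real) < 1 \<Longrightarrow> \<theta> + \<alpha> > 0 \<Longrightarrow> pochhammer (\<theta> + \<alpha>) k / pochhammer (\<theta> + 1) k > 0"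
  using pochhammer_pos[of "\<theta> + \<alpha>" k] pochhammer_pos[of "\<theta> + 1" k] by simp

lemma g_fun_nonneg: "\<alpha> < 1 \<Longrightarrow> \<theta> + \<alpha> > 0 \<Longrightarrow> g_fun n \<theta> \<alpha> \<ge> 0"
  unfolding g_fun_def by (intro sum_nonneg less_imp_le g_fun_term_pos)

lemma g_incr_nonneg: "\<alpha> < 1 \<Longrightarrow> \<theta> + \<alpha> > 0 \<Longrightarrow> g_incr n m \<theta> \<alpha> \<ge> 0"
  unfolding g_incr_def g_fun_def
  by (simp add: sum_mono2 less_imp_le g_fun_term_pos)

lemma pochhammer_split_pred:
  assumes "n > 0"
  shows "pochhammer (x + 1) (n - 1) * pochhammer (x + real n) m = pochhammer (x + 1) (n + m - 1)"
proof -
  have "x + 1 + real (n - 1) = x + real n" "n - 1 + m = n + m - 1" using assms by auto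
  then show ?thesis using pochhammer_product'[of "x + 1" "n - 1" m] by simp
qed

lemma extension_sum_block_weight:
  assumes "\<theta> + 1 > 0" and "\<forall>A\<in>#z. A \<noteq> {} \<and> A \<subseteq> {1..n}"
  shows "extension_sum n (n+m) (block_weight \<alpha> \<theta> (n+m)) z j
           = real ((size z + j) choose j)
             * (pochhammer (\<theta> + real n) m ^ size z * perm_prod_sum (block_weight \<alpha> \<theta> n) z)
             * (pochhammer (\<theta> + 1) (n + m - 1) * g_incr n m \<theta> \<alpha>) ^ j"
  using assms
  by (simp add: extension_sum_closed perm_prod_sum_extended_block_weight new_block_sum_def
      sum_block_weight_new g_incr_def)

lemma sum_extensions_ibp_efpf:
  assumes "\<alpha> < 1" "\<theta> + \<alpha> > 0" and z: "\<forall>A\<in>#z. A \<noteq> {} \<and> A \<subseteq> {1..n}"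
  shows "(\<Sum>l\<in>extensions n (n+m) z j. ibp_efpf \<gamma> \<alpha> \<theta> (n+m) l)
           = ibp_lik \<gamma> \<alpha> \<theta> n z * poisson_prob (\<gamma> * g_incr n m \<theta> \<alpha>) j"
proof -
  define k where "k = size z"
  define PN where "PN = pochhammer (\<theta> + 1) (n + m - 1)"
  define Pn where "Pn = pochhammer (\<theta> + 1) (n - 1)"
  define R where "R = pochhammer (\<theta> + real n) m"
  define \<Delta> where "\<Delta> = g_incr n m \<theta> \<alpha>"
  define S where "S = perm_prod_sum (block_weight \<alpha> \<theta> n) z"
  have "PN > 0" "Pn > 0" unfolding PN_def Pn_def using assms by (auto intro: pochhammer_pos)
  have "Pn ^ k * R ^ k = PN ^ k"
  proof (cases "k = 0")
    case False
    then have "z \<noteq> {#}" unfolding k_def by auto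
    then obtain A where "A \<in># z" by (meson multiset_nonemptyE)
    then have "n > 0" using z by fastforce
    show ?thesis
      unfolding Pn_def R_def PN_def power_mult_distrib[symmetric] pochhammer_split_pred[OF \<open>n > 0\<close>] ..
  qed simp
  then have R: "R ^ k / PN ^ k = 1 / Pn ^ k"
    using \<open>PN > 0\<close> \<open>Pn > 0\<close> by (simp add: field_simps)
  have "(\<Sum>l\<in>extensions n (n+m) z j. ibp_efpf \<gamma> \<alpha> \<theta> (n+m) l)
      = 1 / fact (k + j) * (\<gamma> / PN) ^ (k + j) * exp (- \<gamma> * g_fun (n+m) \<theta> \<alpha>)
        * extension_sum n (n+m) (block_weight \<alpha> \<theta> (n+m)) z j"
    by (simp add: extension_sum_def sum_distrib_left ibp_efpf_eq length_extensions k_def PN_def)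
  also have "extension_sum n (n+m) (block_weight \<alpha> \<theta> (n+m)) z j
      = real ((k + j) choose j) * (R ^ k * S) * (PN * \<Delta>) ^ j"
    using assms by (simp add: extension_sum_block_weight k_def R_def S_def PN_def \<Delta>_def)
  also have "1 / fact (k + j) * (\<gamma> / PN) ^ (k + j) * exp (- \<gamma> * g_fun (n+m) \<theta> \<alpha>)
        * (real ((k + j) choose j) * (R ^ k * S) * (PN * \<Delta>) ^ j)
      = S / (fact k * Pn ^ k) * \<gamma> ^ k * exp (- \<gamma> * g_fun n \<theta> \<alpha>) * poisson_prob (\<gamma> * \<Delta>) j"
  proof -
    have ex: "exp (- \<gamma> * g_fun (n+m) \<theta> \<alpha>) = exp (- \<gamma> * g_fun n \<theta> \<alpha>) * exp (- (\<gamma> * \<Delta>))"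
      by (simp add: \<Delta>_def g_incr_def exp_add[symmetric] algebra_simps)
    have bin: "real ((k + j) choose j) = fact (k + j) / (fact k * fact j)"
      by (simp add: binomial_fact)
    have "1 / fact (k + j) * (\<gamma> / PN) ^ (k + j) * exp (- \<gamma> * g_fun (n+m) \<theta> \<alpha>)
        * (real ((k + j) choose j) * (R ^ k * S) * (PN * \<Delta>) ^ j)
      = 1 / fact k * (\<gamma> ^ k * (R ^ k / PN ^ k)) * exp (- \<gamma> * g_fun n \<theta> \<alpha>) * S
          * poisson_prob (\<gamma> * \<Delta>) j"
      unfolding bin ex poisson_prob_def using \<open>PN > 0\<close>
      by (simp add: power_add field_simps)
    then show ?thesis unfolding R by simp
  qed
  finally show ?thesis by (simp add: ibp_lik_eq lik_const_def S_def k_def Pn_def \<Delta>_def)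
qed

section \<open>Poisson concentration\<close>

lemma poisson_prob_nonneg: "\<mu> \<ge> 0 \<Longrightarrow> poisson_prob \<mu> j \<ge> 0"
  by (simp add: poisson_prob_def)

lemma poisson_prob_sums: "poisson_prob \<mu> sums 1"
proof -
  have "(\<lambda>j. exp (- \<mu>) * (\<mu> ^ j /\<^sub>R fact j)) sums (exp (- \<mu>) * exp \<mu>)"
    by (rule sums_mult[OF exp_converges])
  moreover have "(\<lambda>j. exp (- \<mu>) * (\<mu> ^ j /\<^sub>R fact j)) = poisson_prob \<mu>"
    by (simp add: fun_eq_iff poisson_prob_def divide_inverse mult_ac)
  ultimately show ?thesis by (simp add: exp_add[symmetric])
qed

lemma poisson_prob_has_sum: "\<mu> \<ge> 0 \<Longrightarrow> (poisson_prob \<mu> has_sum 1) UNIV"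
  by (rule sums_nonneg_imp_has_sum[OF poisson_prob_sums]) (simp add: poisson_prob_nonneg)

lemma sum_poisson_prob_le_1: "\<mu> \<ge> 0 \<Longrightarrow> finite A \<Longrightarrow> sum (poisson_prob \<mu>) A \<le> 1"
  using sum_le_suminf[OF sums_summable[OF poisson_prob_sums], of A] sums_unique[OF poisson_prob_sums]
  by (simp add: poisson_prob_nonneg)

lemma poisson_prob_le_1: "\<mu> \<ge> 0 \<Longrightarrow> poisson_prob \<mu> j \<le> 1"
  using sum_poisson_prob_le_1[of \<mu> "{j}"] by simp

lemma poisson_prob_measurable [measurable]: "(\<lambda>x. poisson_prob (f x) j) \<in> borel_measurable borel"
  if [measurable]: "f \<in> borel_measurable borel"
  unfolding poisson_prob_def by measurable

lemma poisson_prob_Suc: "real (Suc i) * poisson_prob \<mu> (Suc i) = \<mu> * poisson_prob \<mu> i"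
  by (simp add: poisson_prob_def field_simps del: of_nat_Suc)

lemma poisson_mean_sums: "(\<lambda>j. real j * poisson_prob \<mu> j) sums \<mu>"
proof -
  have "(\<lambda>i. real (Suc i) * poisson_prob \<mu> (Suc i)) sums (\<mu> * 1)"
    unfolding poisson_prob_Suc by (rule sums_mult[OF poisson_prob_sums])
  then show ?thesis by (subst (asm) sums_Suc_iff) simp
qed

lemma poisson_factorial_moment_sums: "(\<lambda>j. real j * (real j - 1) * poisson_prob \<mu> j) sums (\<mu> * \<mu>)"
proof -
  have "(\<lambda>i. real (Suc i) * (real (Suc i) - 1) * poisson_prob \<mu> (Suc i)) = (\<lambda>i. \<mu> * (real i * poisson_prob \<mu> i))"
    using poisson_prob_Suc by (simp add: fun_eq_iff mult.left_commute)
  then have "(\<lambda>i. real (Suc i) * (real (Suc i) - 1) * poisson_prob \<mu> (Suc i)) sums (\<mu> * \<mu>)"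
    using sums_mult[OF poisson_mean_sums] by simp
  then show ?thesis by (subst (asm) sums_Suc_iff) simp
qed

lemma poisson_variance_sums: "(\<lambda>j. poisson_prob \<mu> j * (real j - \<mu>)\<^sup>2) sums \<mu>"
proof -
  have "(\<lambda>j. real j * (real j - 1) * poisson_prob \<mu> j + (1 - 2 * \<mu>) * (real j * poisson_prob \<mu> j)
            + \<mu>\<^sup>2 * poisson_prob \<mu> j) sums (\<mu> * \<mu> + (1 - 2 * \<mu>) * \<mu> + \<mu>\<^sup>2 * 1)"
    by (intro sums_add sums_mult poisson_factorial_moment_sums poisson_mean_sums poisson_prob_sums)
  then show ?thesis by (simp add: power2_eq_square algebra_simps)
qed

lemma poisson_Chebyshev:
  assumes "\<mu> \<ge> 0" "d > 0" and s: "(\<lambda>j. if j \<in> A then poisson_prob \<mu> j else 0) sums s"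
    and far: "\<And>j. j \<in> A \<Longrightarrow> d \<le> \<bar>real j - \<mu>\<bar>"
  shows "s \<le> \<mu> / d\<^sup>2"
proof (rule sums_le[OF _ s sums_divide[OF poisson_variance_sums]])
  fix j
  have "j \<in> A \<Longrightarrow> 1 \<le> (real j - \<mu>)\<^sup>2 / d\<^sup>2"
    using far[of j] \<open>d > 0\<close> abs_le_square_iff[of d "real j - \<mu>"] by simp
  then show "(if j \<in> A then poisson_prob \<mu> j else 0) \<le> poisson_prob \<mu> j * (real j - \<mu>)\<^sup>2 / d\<^sup>2"
    using poisson_prob_nonneg[OF \<open>\<mu> \<ge> 0\<close>, of j]
      mult_left_mono[of 1 "(real j - \<mu>)\<^sup>2 / d\<^sup>2" "poisson_prob \<mu> j"]
    by auto
qed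

definition poisson_cdf :: "real \<Rightarrow> real \<Rightarrow> real" where
  "poisson_cdf \<mu> t = sum (poisson_prob \<mu>) {j. real j \<le> t}"

lemma finite_nat_le_real: "finite {j::nat. real j \<le> t}"
  by (rule finite_subset[of _ "{..nat \<lceil>t\<rceil>}"]) (auto simp: le_nat_iff, linarith)

lemma poisson_cdf_nonneg: "\<mu> \<ge> 0 \<Longrightarrow> poisson_cdf \<mu> t \<ge> 0"
  unfolding poisson_cdf_def by (intro sum_nonneg poisson_prob_nonneg)

lemma poisson_cdf_le_1: "\<mu> \<ge> 0 \<Longrightarrow> poisson_cdf \<mu> t \<le> 1"
  unfolding poisson_cdf_def by (intro sum_poisson_prob_le_1 finite_nat_le_real)

lemma poisson_cdf_ge:
  assumes "\<mu> \<ge> 0" "d > 0" "\<mu> + d \<le> t"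
  shows "1 - \<mu> / d\<^sup>2 \<le> poisson_cdf \<mu> t"
proof -
  define A where "A = {j. real j \<le> t}"
  have "(\<lambda>j. poisson_prob \<mu> j - (if j \<in> A then poisson_prob \<mu> j else 0)) sums (1 - poisson_cdf \<mu> t)"
    unfolding poisson_cdf_def A_def
    by (intro sums_diff poisson_prob_sums sums_If_finite_set finite_nat_le_real)
  moreover have "(\<lambda>j. poisson_prob \<mu> j - (if j \<in> A then poisson_prob \<mu> j else 0))
      = (\<lambda>j. if j \<in> - A then poisson_prob \<mu> j else 0)"
    by auto
  ultimately have "(\<lambda>j. if j \<in> - A then poisson_prob \<mu> j else 0) sums (1 - poisson_cdf \<mu> t)"
    by simp
  moreover have "d \<le> \<bar>real j - \<mu>\<bar>" if "j \<in> - A" for j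
    using that assms(3) by (simp add: A_def)
  ultimately have "1 - poisson_cdf \<mu> t \<le> \<mu> / d\<^sup>2"
    by (rule poisson_Chebyshev[OF assms(1,2)])
  then show ?thesis by simp
qed

lemma poisson_cdf_le:
  assumes "\<mu> \<ge> 0" "d > 0" "t + d \<le> \<mu>"
  shows "poisson_cdf \<mu> t \<le> \<mu> / d\<^sup>2"
proof (rule poisson_Chebyshev[OF assms(1,2)])
  show "(\<lambda>j. if j \<in> {j. real j \<le> t} then poisson_prob \<mu> j else 0) sums poisson_cdf \<mu> t"
    unfolding poisson_cdf_def by (intro sums_If_finite_set finite_nat_le_real)
  show "d \<le> \<bar>real j - \<mu>\<bar>" if "j \<in> {j. real j \<le> t}" for j
    using that assms(3) by simp
qed

lemma poisson_cdf_near_step: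
  assumes "\<mu> \<ge> 0" "d > 0" "d \<le> \<bar>t - \<mu>\<bar>"
  shows "\<bar>poisson_cdf \<mu> t - (if \<mu> \<le> t then 1 else 0)\<bar> \<le> \<mu> / d\<^sup>2"
proof (cases "\<mu> \<le> t")
  case True
  then have "1 - \<mu> / d\<^sup>2 \<le> poisson_cdf \<mu> t" using assms by (intro poisson_cdf_ge) auto
  then show ?thesis using True poisson_cdf_le_1[OF assms(1), of t] by simp
next
  case False
  then have "poisson_cdf \<mu> t \<le> \<mu> / d\<^sup>2" using assms by (intro poisson_cdf_le) auto
  then show ?thesis using False poisson_cdf_nonneg[OF assms(1), of t] by simp
qed

lemma tendsto_poisson_cdf:
  assumes c: "filterlim c at_top sequentially" and lim: "(\<lambda>m. \<mu> m / c m) \<longlonglongrightarrow> l"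
    and "l \<noteq> x" and \<mu>: "\<And>m. \<mu> m \<ge> 0"
  shows "(\<lambda>m. poisson_cdf (\<mu> m) (x * c m)) \<longlonglongrightarrow> (if l \<le> x then 1 else 0)"
proof -
  define \<kappa> where "\<kappa> = \<bar>x - l\<bar> / 2"
  have "\<kappa> > 0" using \<open>l \<noteq> x\<close> by (simp add: \<kappa>_def)
  define B where "B m = \<mu> m / (\<kappa> * c m)\<^sup>2" for m
  have "(\<lambda>m. \<mu> m / c m * inverse (c m) / \<kappa>\<^sup>2) \<longlonglongrightarrow> l * 0 / \<kappa>\<^sup>2"
    by (intro tendsto_divide tendsto_mult lim tendsto_inverse_0_at_top[OF c] tendsto_const)
      (use \<open>\<kappa> > 0\<close> in simp)
  moreover have "\<mu> m / c m * inverse (c m) / \<kappa>\<^sup>2 = B m" for m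
    by (simp add: B_def divide_inverse power2_eq_square inverse_mult_distrib mult_ac)
  ultimately have B: "B \<longlonglongrightarrow> 0" by simp
  have "eventually (\<lambda>m. c m > 0) sequentially"
    using c filterlim_at_top_dense by blast
  then have "eventually (\<lambda>m. \<bar>poisson_cdf (\<mu> m) (x * c m) - (if l \<le> x then 1 else 0)\<bar> \<le> B m) sequentially"
    using tendstoD[OF lim \<open>\<kappa> > 0\<close>]
  proof eventually_elim
    case (elim m)
    have "(\<mu> m / c m - l) * c m = \<mu> m - l * c m" using elim by (simp add: field_simps)
    then have "\<bar>\<mu> m - l * c m\<bar> = \<bar>\<mu> m / c m - l\<bar> * c m" using elim by (metis abs_mult abs_of_pos)
    then have close: "\<bar>\<mu> m - l * c m\<bar> < \<kappa> * c m" using elim by (simp add: dist_real_def)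
    have gap: "\<bar>x * c m - l * c m\<bar> = 2 * (\<kappa> * c m)"
      using elim by (simp add: \<kappa>_def abs_mult left_diff_distrib[symmetric])
    have "\<bar>x * c m - l * c m\<bar> \<le> \<bar>x * c m - \<mu> m\<bar> + \<bar>\<mu> m - l * c m\<bar>"
      using abs_triangle_ineq[of "x * c m - \<mu> m" "\<mu> m - l * c m"] by simp
    then have sep: "\<kappa> * c m \<le> \<bar>x * c m - \<mu> m\<bar>" using close gap by linarith
    have "l * c m \<le> x * c m \<longleftrightarrow> l \<le> x" using elim by simp
    then have "\<mu> m \<le> x * c m \<longleftrightarrow> l \<le> x" using close gap sep by (auto simp: abs_if split: if_splits)
    then show ?case
      using poisson_cdf_near_step[OF \<mu> _ sep] elim \<open>\<kappa> > 0\<close> by (simp add: B_def)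
  qed
  then have "eventually (\<lambda>m. norm (poisson_cdf (\<mu> m) (x * c m) - (if l \<le> x then 1 else 0)) \<le> B m)
      sequentially"
    by simp
  then have "(\<lambda>m. poisson_cdf (\<mu> m) (x * c m) - (if l \<le> x then 1 else 0)) \<longlonglongrightarrow> 0"
    by (rule Lim_null_comparison[OF _ B])
  then show ?thesis by (simp add: LIM_zero_iff)
qed

section \<open>Gamma densities\<close>

lemma gamma_density_measurable [measurable]: "gamma_density a b \<in> borel_measurable borel"
  unfolding gamma_density_def by measurable

lemma gamma_density_nonneg: "a > 0 \<Longrightarrow> gamma_density a b x \<ge> 0"
  by (simp add: gamma_density_def Gamma_real_pos)

lemma gamma_density_nonpos [simp]: "x \<le> 0 \<Longrightarrow> gamma_density a b x = 0"
  by (simp add: gamma_density_def)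

lemma nn_integral_gamma_density:
  assumes a: "a > 0" and b: "b > 0"
  shows "(\<integral>\<^sup>+x. ennreal (gamma_density a b x) \<partial>lborel) = 1"
proof -
  define f where "f t = ennreal (indicator {0..} t * t powr (a - 1) / exp t)" for t :: real
  have fm[measurable]: "f \<in> borel_measurable borel" unfolding f_def by measurable
  have G: "ennreal (Gamma a) = (\<integral>\<^sup>+t. f t \<partial>lborel)"
    unfolding f_def using Gamma_conv_nn_integral_real[OF a] by simp
  also have "\<dots> = ennreal b * (\<integral>\<^sup>+x. f (0 + b * x) \<partial>lborel)"
    using nn_integral_real_affine[OF fm, of b 0] b by simp
  finally have G2: "ennreal (Gamma a) = ennreal b * (\<integral>\<^sup>+x. f (b * x) \<partial>lborel)" by simp
  have Gpos: "Gamma a > 0" using a by (rule Gamma_real_pos)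
  have pt: "ennreal (gamma_density a b x) = ennreal (b / Gamma a) * f (b * x)" for x
  proof (cases "x > 0")
    case True
    have "(b * x) powr (a - 1) = b powr (a - 1) * x powr (a - 1)"
      using True b by (simp add: powr_mult)
    moreover have "b powr a = b * b powr (a - 1)"
      using b by (simp add: powr_diff)
    ultimately have "gamma_density a b x = b / Gamma a * ((b * x) powr (a - 1) / exp (b * x))"
      using True by (simp add: gamma_density_def exp_minus field_simps)
    then show ?thesis using True b Gpos
      by (simp add: f_def ennreal_mult[symmetric] indicator_def)
  next
    case False
    then have "b * x \<le> 0" using b by (simp add: mult_nonneg_nonpos)
    then have "f (b * x) = 0" unfolding f_def by (cases "b * x = 0") (auto simp: indicator_def)
    then show ?thesis using False by simp
  qed
  have "(\<integral>\<^sup>+x. ennreal (gamma_density a b x) \<partial>lborel) = ennreal (b / Gamma a) * (\<integral>\<^sup>+x. f (b * x) \<partial>lborel)"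
    unfolding pt by (rule nn_integral_cmult) measurable
  also have "\<dots> = ennreal (1 / Gamma a) * (ennreal b * (\<integral>\<^sup>+x. f (b * x) \<partial>lborel))"
    using b Gpos by (simp add: ennreal_mult[symmetric] mult.assoc[symmetric])
  also have "\<dots> = ennreal (1 / Gamma a) * ennreal (Gamma a)" unfolding G2 ..
  also have "\<dots> = 1" using Gpos by (simp add: ennreal_mult[symmetric])
  finally show ?thesis .
qed

lemma integrable_gamma_density:
  assumes "a > 0" "b > 0"
  shows "integrable lborel (gamma_density a b)"
  by (rule integrableI_nn_integral_finite[where x=1]) (use assms gamma_density_nonneg nn_integral_gamma_density in auto)

lemma integral_gamma_density:
  assumes "a > 0" "b > 0"
  shows "(\<integral>x. gamma_density a b x \<partial>lborel) = 1"
  using assms by (subst integral_eq_nn_integral) (auto simp: gamma_density_nonneg nn_integral_gamma_density)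

lemma integrable_bounded_mult_gamma_density:
  assumes "a > 0" "b > 0" and hm[measurable]: "h \<in> borel_measurable borel" and hb: "\<And>x. x > 0 \<Longrightarrow> \<bar>h x\<bar> \<le> 1"
  shows "integrable lborel (\<lambda>x. h x * gamma_density a b x)"
proof (rule Bochner_Integration.integrable_bound[OF integrable_gamma_density[OF assms(1,2)]])
  show "(\<lambda>x. h x * gamma_density a b x) \<in> borel_measurable lborel" by measurable
  show "AE x in lborel. norm (h x * gamma_density a b x) \<le> norm (gamma_density a b x)"
  proof (rule AE_I2)
    fix x show "norm (h x * gamma_density a b x) \<le> norm (gamma_density a b x)"
    proof (cases "x > 0")
      case True then show ?thesis using hb[OF True] gamma_density_nonneg[OF assms(1), of b x]
        by (auto simp: abs_mult intro!: mult_left_le_one_le)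
    qed simp
  qed
qed

lemma gamma_density_conjugate:
  assumes a: "a > 0" and b: "b > 0" and G: "G \<ge> 0"
  shows "c * x ^ k * exp (- x * G) * gamma_density a b x
     = (c * b powr a * Gamma (a + real k) / (Gamma a * (b + G) powr (a + real k))) * gamma_density (a + real k) (b + G) x"
proof (cases "x > 0")
  case True
  have Gpos: "Gamma a > 0" "Gamma (a + real k) > 0" using a by (auto intro: Gamma_real_pos)
  have bG: "b + G > 0" using b G by simp
  define P where "P = x ^ k * x powr (a - 1)"
  define E where "E = exp (- x * G) * exp (- b * x)"
  have h1: "P = x powr (a + real k - 1)"
    using True by (simp add: P_def powr_realpow[symmetric] powr_add[symmetric] algebra_simps)
  have h2: "E = exp (- (b + G) * x)"
    by (simp add: E_def exp_add[symmetric] algebra_simps)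
  have L: "c * x ^ k * exp (- x * G) * gamma_density a b x = c * b powr a / Gamma a * (P * E)"
    using True by (simp add: gamma_density_def P_def E_def)
  have R: "gamma_density (a + real k) (b + G) x = (b + G) powr (a + real k) / Gamma (a + real k) * (P * E)"
    using True by (simp add: gamma_density_def h1 h2)
  have bGp: "(b + G) powr (a + real k) > 0" using bG by simp
  show ?thesis unfolding L R using Gpos bGp by (simp add: field_simps)
next
  case False
  then show ?thesis by simp
qed

lemma gamma_density_scale:
  assumes "b > 0" "s > 0"
  shows "gamma_density a (b / s) (s * x) = gamma_density a b x / s"
proof (cases "x > 0")
  case True
  have "(b / s) powr a * (s * x) powr (a - 1) = b powr a * x powr (a - 1) / s"
    using assms True by (simp add: powr_divide powr_mult powr_diff field_simps)
  then show ?thesis using assms True by (simp add: gamma_density_def)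
next
  case False
  then have "s * x \<le> 0" using assms by (simp add: mult_nonneg_nonpos)
  then show ?thesis using False by simp
qed

lemma distr_gamma_measure_scale:
  assumes a: "a > 0" and b: "b > 0" and s: "s > 0"
  shows "distr (gamma_measure a b) borel (\<lambda>x. x * s) = gamma_measure a (b / s)"
proof (rule measure_eqI)
  show "sets (distr (gamma_measure a b) borel (\<lambda>x. x * s)) = sets (gamma_measure a (b / s))"
    by (simp add: gamma_measure_def)
  fix A assume A: "A \<in> sets (distr (gamma_measure a b) borel (\<lambda>x. x * s))"
  then have Ab[measurable]: "A \<in> sets borel" by simp
  have pt: "ennreal (gamma_density a (b / s) (s * x)) * indicator A (s * x)
      = ennreal (1 / s) * (ennreal (gamma_density a b x) * indicator ((\<lambda>x. x * s) -` A) x)" for x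
    using s gamma_density_nonneg[OF a, of b x]
    by (simp add: gamma_density_scale[OF b s] ennreal_mult'[symmetric] indicator_def mult.commute)
  have "emeasure (gamma_measure a (b / s)) A = (\<integral>\<^sup>+y. ennreal (gamma_density a (b / s) y) * indicator A y \<partial>lborel)"
    unfolding gamma_measure_def by (subst emeasure_density) auto
  also have "\<dots> = ennreal s * (\<integral>\<^sup>+x. ennreal (gamma_density a (b / s) (0 + s * x)) * indicator A (0 + s * x) \<partial>lborel)"
    using s by (subst nn_integral_real_affine[where c = s and t = 0]) auto
  also have "\<dots> = ennreal s * (ennreal (1 / s) * (\<integral>\<^sup>+x. ennreal (gamma_density a b x) * indicator ((\<lambda>x. x * s) -` A) x \<partial>lborel))"
    by (simp add: pt nn_integral_cmult)
  also have "\<dots> = (\<integral>\<^sup>+x. ennreal (gamma_density a b x) * indicator ((\<lambda>x. x * s) -` A) x \<partial>lborel)"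
    using s by (simp add: ennreal_mult[symmetric] mult.assoc[symmetric])
  also have "\<dots> = emeasure (distr (gamma_measure a b) borel (\<lambda>x. x * s)) A"
  proof -
    have fm: "(\<lambda>x. x * s) \<in> borel_measurable borel" by measurable
    have "(\<lambda>x. x * s) -` A \<inter> space borel \<in> sets borel" by (rule measurable_sets[OF fm Ab])
    then have pre: "(\<lambda>x. x * s) -` A \<in> sets lborel" by simp
    show ?thesis unfolding gamma_measure_def
      by (subst emeasure_distr) (auto simp: emeasure_density[OF _ pre])
  qed
  finally show "emeasure (distr (gamma_measure a b) borel (\<lambda>x. x * s)) A = emeasure (gamma_measure a (b / s)) A" ..
qed

lemma cdf_gamma_measure_scale:
  assumes a: "a > 0" and b: "b > 0" and L: "L > 0"
  shows "cdf (gamma_measure a (b / L)) x = (\<integral>\<gamma>. indicator {\<gamma>. \<gamma> * L \<le> x} \<gamma> * gamma_density a b \<gamma> \<partial>lborel)"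
proof -
  have setm: "{\<gamma>::real. \<gamma> * L \<le> x} \<in> sets borel" by measurable
  have "cdf (gamma_measure a (b / L)) x = measure (distr (gamma_measure a b) borel (\<lambda>\<gamma>. \<gamma> * L)) {..x}"
    unfolding cdf_def distr_gamma_measure_scale[OF a b L] ..
  also have "\<dots> = measure (gamma_measure a b) ((\<lambda>\<gamma>. \<gamma> * L) -` {..x} \<inter> space (gamma_measure a b))"
    by (rule measure_distr) (auto simp: gamma_measure_def)
  also have "(\<lambda>\<gamma>. \<gamma> * L) -` {..x} \<inter> space (gamma_measure a b) = {\<gamma>. \<gamma> * L \<le> x}"
    by (auto simp: gamma_measure_def)
  also have "measure (gamma_measure a b) {\<gamma>. \<gamma> * L \<le> x}
      = enn2real (\<integral>\<^sup>+\<gamma>. ennreal (gamma_density a b \<gamma>) * indicator {\<gamma>. \<gamma> * L \<le> x} \<gamma> \<partial>lborel)"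
    unfolding measure_def gamma_measure_def using setm by (subst emeasure_density) auto
  also have "(\<integral>\<^sup>+\<gamma>. ennreal (gamma_density a b \<gamma>) * indicator {\<gamma>. \<gamma> * L \<le> x} \<gamma> \<partial>lborel)
      = (\<integral>\<^sup>+\<gamma>. ennreal (indicator {\<gamma>. \<gamma> * L \<le> x} \<gamma> * gamma_density a b \<gamma>) \<partial>lborel)"
    by (intro nn_integral_cong) (auto simp: indicator_def)
  also have "enn2real \<dots> = (\<integral>\<gamma>. indicator {\<gamma>. \<gamma> * L \<le> x} \<gamma> * gamma_density a b \<gamma> \<partial>lborel)"
    using setm by (subst integral_eq_nn_integral) (auto simp: gamma_density_nonneg[OF a])
  finally show ?thesis .
qed

section \<open>Posterior and predictive distribution\<close>

definition marginal_lik :: "real \<Rightarrow> real \<Rightarrow> real \<Rightarrow> real \<Rightarrow> nat \<Rightarrow> nat set multiset \<Rightarrow> real" where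
  "marginal_lik a b \<alpha> \<theta> n z = lik_const \<alpha> \<theta> n z * b powr a * Gamma (a + real (size z))
      / (Gamma a * (b + g_fun n \<theta> \<alpha>) powr (a + real (size z)))"

lemma marginal_lik_pos:
  assumes "a > 0" "b > 0" "\<alpha> < 1" "\<theta> + \<alpha> > 0"
  shows "marginal_lik a b \<alpha> \<theta> n z > 0"
proof -
  have "b + g_fun n \<theta> \<alpha> > 0" using g_fun_nonneg[OF assms(3,4), of n] assms by simp
  then show ?thesis unfolding marginal_lik_def using assms lik_const_pos[OF assms(3,4)]
    by (intro divide_pos_pos mult_pos_pos Gamma_real_pos) auto
qed

lemma ibp_lik_mult_gamma_density:
  assumes "a > 0" "b > 0" "\<alpha> < 1" "\<theta> + \<alpha> > 0"
  shows "ibp_lik \<gamma> \<alpha> \<theta> n z * gamma_density a b \<gamma>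
     = marginal_lik a b \<alpha> \<theta> n z * gamma_density (a + real (size z)) (b + g_fun n \<theta> \<alpha>) \<gamma>"
  unfolding ibp_lik_eq marginal_lik_def
  by (rule gamma_density_conjugate) (use assms g_fun_nonneg in auto)

lemma integral_ibp_lik_mult_gamma_density:
  assumes "a > 0" "b > 0" "\<alpha> < 1" "\<theta> + \<alpha> > 0"
  shows "(\<integral>\<gamma>. ibp_lik \<gamma> \<alpha> \<theta> n z * gamma_density a b \<gamma> \<partial>lborel) = marginal_lik a b \<alpha> \<theta> n z"
  using integral_gamma_density[of "a + real (size z)" "b + g_fun n \<theta> \<alpha>"] g_fun_nonneg[OF assms(3,4), of n] assms
  by (simp add: ibp_lik_mult_gamma_density)

lemma posterior_eq_gamma_measure:
  assumes "a > 0" "b > 0" "\<alpha> < 1" "\<theta> + \<alpha> > 0"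
  shows "posterior a b \<alpha> \<theta> n z = gamma_measure (a + real (size z)) (b + g_fun n \<theta> \<alpha>)"
proof -
  have "b + g_fun n \<theta> \<alpha> > 0" using g_fun_nonneg[OF assms(3,4), of n] assms by simp
  then show ?thesis
    unfolding posterior_def gamma_measure_def integral_ibp_lik_mult_gamma_density[OF assms]
      ibp_lik_mult_gamma_density[OF assms]
    using marginal_lik_pos[OF assms, of n z] integral_gamma_density[of "a + real (size z)"] assms
    by simp
qed

lemma has_sum_ibp_efpf:
  assumes "\<gamma> \<ge> 0" and a: "\<alpha> < 1" "\<theta> + \<alpha> > 0" and z: "\<forall>A\<in>#z. A \<noteq> {} \<and> A \<subseteq> {1..n}"
  shows "(ibp_efpf \<gamma> \<alpha> \<theta> (n+m) has_sum ibp_lik \<gamma> \<alpha> \<theta> n z) (\<Union>j. extensions n (n+m) z j)"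
proof -
  define F where "F j = ibp_lik \<gamma> \<alpha> \<theta> n z * poisson_prob (\<gamma> * g_incr n m \<theta> \<alpha>) j" for j
  define f where "f = ibp_efpf \<gamma> \<alpha> \<theta> (n+m)"
  define E where "E = extensions n (n+m) z"
  have E_disj: "disjoint_family E"
    unfolding disjoint_family_on_def E_def extensions_def by auto
  have fib: "(f has_sum F j) (E j)" for j
    unfolding f_def F_def E_def
    by (rule has_sum_finiteI[OF finite_extensions]) (simp add: sum_extensions_ibp_efpf[OF a z])
  have "\<gamma> * g_incr n m \<theta> \<alpha> \<ge> 0" using assms g_incr_nonneg[OF a] by simp
  then have Fs: "(F has_sum ibp_lik \<gamma> \<alpha> \<theta> n z) UNIV"
    unfolding F_def using has_sum_cmult_right[OF poisson_prob_has_sum] by fastforce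
  have "f summable_on (\<Union>j. E j)"
    using fib Fs E_disj ibp_efpf_nonneg[OF \<open>\<gamma> \<ge> 0\<close> a]
    by (intro summable_on_UnionI[where g = F]) (auto simp: f_def dest: has_sum_imp_summable)
  moreover have inj: "inj_on snd (SIGMA j:UNIV. E j)"
    using E_disj unfolding disjoint_family_on_def inj_on_def by auto
  moreover have img: "(\<Union>j. E j) = snd ` (SIGMA j:UNIV. E j)" by force
  ultimately have "(f \<circ> snd) summable_on (SIGMA j:UNIV. E j)"
    by (simp add: summable_on_reindex)
  then have "((f \<circ> snd) has_sum ibp_lik \<gamma> \<alpha> \<theta> n z) (SIGMA j:UNIV. E j)"
    by (intro has_sum_SigmaI[OF _ Fs]) (simp add: fib)
  then show ?thesis unfolding f_def[symmetric] E_def[symmetric] img has_sum_reindex[OF inj] .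
qed

lemma mix_joint_singleton:
  assumes "a > 0" "b > 0" and a: "\<alpha> < 1" "\<theta> + \<alpha> > 0" and z: "\<forall>A\<in>#z. A \<noteq> {} \<and> A \<subseteq> {1..n}"
  shows "mix_joint a b \<alpha> \<theta> n m z {j} = marginal_lik a b \<alpha> \<theta> n z *
     (\<integral>\<gamma>. poisson_prob (\<gamma> * g_incr n m \<theta> \<alpha>) j
            * gamma_density (a + real (size z)) (b + g_fun n \<theta> \<alpha>) \<gamma> \<partial>lborel)"
proof -
  have E: "{l \<in> ofa (n + m). restr n l = z \<and> new_feats n l \<in> {j}} = extensions n (n + m) z j"
    by (simp add: extensions_def)
  have "mix_joint a b \<alpha> \<theta> n m z {j} = (\<integral>\<gamma>. marginal_lik a b \<alpha> \<theta> n z *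
     (poisson_prob (\<gamma> * g_incr n m \<theta> \<alpha>) j * gamma_density (a + real (size z)) (b + g_fun n \<theta> \<alpha>) \<gamma>) \<partial>lborel)"
    unfolding mix_joint_def E
  proof (rule Bochner_Integration.integral_cong[OF refl])
    fix \<gamma>
    show "(\<Sum>\<^sub>\<infinity>l\<in>extensions n (n + m) z j. ibp_efpf \<gamma> \<alpha> \<theta> (n + m) l) * gamma_density a b \<gamma>
      = marginal_lik a b \<alpha> \<theta> n z * (poisson_prob (\<gamma> * g_incr n m \<theta> \<alpha>) j
          * gamma_density (a + real (size z)) (b + g_fun n \<theta> \<alpha>) \<gamma>)"
      using ibp_lik_mult_gamma_density[OF assms(1,2) a, of \<gamma> n z]
      by (simp add: finite_extensions sum_extensions_ibp_efpf[OF a z] mult_ac)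
  qed
  then show ?thesis by simp
qed

lemma mix_joint_UNIV:
  assumes "a > 0" "b > 0" and a: "\<alpha> < 1" "\<theta> + \<alpha> > 0" and z: "\<forall>A\<in>#z. A \<noteq> {} \<and> A \<subseteq> {1..n}"
  shows "mix_joint a b \<alpha> \<theta> n m z UNIV = marginal_lik a b \<alpha> \<theta> n z"
proof -
  have "{l \<in> ofa (n + m). restr n l = z \<and> new_feats n l \<in> UNIV} = (\<Union>j. extensions n (n + m) z j)"
    by (auto simp: extensions_def)
  moreover have "(\<Sum>\<^sub>\<infinity>l\<in>(\<Union>j. extensions n (n + m) z j). ibp_efpf \<gamma> \<alpha> \<theta> (n + m) l) * gamma_density a b \<gamma>
      = ibp_lik \<gamma> \<alpha> \<theta> n z * gamma_density a b \<gamma>" for \<gamma>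
    by (cases "\<gamma> > 0") (simp_all add: infsumI[OF has_sum_ibp_efpf[OF _ a z]])
  ultimately show ?thesis
    unfolding mix_joint_def integral_ibp_lik_mult_gamma_density[OF assms(1,2) a, symmetric]
    by (intro Bochner_Integration.integral_cong) simp_all
qed

lemma cond_K_eq:
  assumes "a > 0" "b > 0" and a: "\<alpha> < 1" "\<theta> + \<alpha> > 0" and z: "\<forall>A\<in>#z. A \<noteq> {} \<and> A \<subseteq> {1..n}"
  shows "cond_K a b \<alpha> \<theta> n m z j =
     (\<integral>\<gamma>. poisson_prob (\<gamma> * g_incr n m \<theta> \<alpha>) j
            * gamma_density (a + real (size z)) (b + g_fun n \<theta> \<alpha>) \<gamma> \<partial>lborel)"
  unfolding cond_K_def mix_joint_singleton[OF assms] mix_joint_UNIV[OF assms]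
  using marginal_lik_pos[OF assms(1,2) a, of n z] by simp

lemma measure_density_count_space_finite:
  assumes "\<And>j. p j \<ge> 0" "finite A"
  shows "measure (density (count_space UNIV) (\<lambda>j. ennreal (p j))) A = sum p A"
proof -
  have "emeasure (density (count_space UNIV) (\<lambda>j. ennreal (p j))) A = (\<integral>\<^sup>+j. ennreal (p j) \<partial>count_space A)"
    by (subst emeasure_density) (auto simp: nn_integral_count_space_indicator)
  also have "\<dots> = ennreal (sum p A)"
    using assms by (simp add: nn_integral_count_space_finite)
  finally show ?thesis unfolding measure_def using assms by (simp add: sum_nonneg)
qed

lemma cdf_cond_law_scaled:
  assumes "c > 0" "\<And>j. cond_K a b \<alpha> \<theta> n m z j \<ge> 0"
  shows "cdf (cond_law_scaled a b \<alpha> \<theta> n m z c) x = sum (cond_K a b \<alpha> \<theta> n m z) {j. real j \<le> x * c}"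
proof -
  define D where "D = density (count_space UNIV) (\<lambda>j. ennreal (cond_K a b \<alpha> \<theta> n m z j))"
  have "(\<lambda>j. real j / c) -` {..x} \<inter> space D = {j. real j \<le> x * c}"
    using assms(1) by (auto simp: D_def pos_divide_le_eq)
  moreover have "cdf (cond_law_scaled a b \<alpha> \<theta> n m z c) x = measure D ((\<lambda>j. real j / c) -` {..x} \<inter> space D)"
    unfolding cdf_def cond_law_scaled_def D_def[symmetric] by (rule measure_distr) (simp_all add: D_def)
  ultimately show ?thesis
    unfolding D_def using measure_density_count_space_finite[OF assms(2) finite_nat_le_real] by simp
qed

lemma cdf_cond_law_scaled_eq_integral:
  assumes "a > 0" "b > 0" and a: "\<alpha> < 1" "\<theta> + \<alpha> > 0" and z: "\<forall>A\<in>#z. A \<noteq> {} \<and> A \<subseteq> {1..n}"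
    and "c > 0"
  shows "cdf (cond_law_scaled a b \<alpha> \<theta> n m z c) x
    = (\<integral>\<gamma>. poisson_cdf (\<gamma> * g_incr n m \<theta> \<alpha>) (x * c)
            * gamma_density (a + real (size z)) (b + g_fun n \<theta> \<alpha>) \<gamma> \<partial>lborel)"
proof -
  define a' b' where "a' = a + real (size z)" and "b' = b + g_fun n \<theta> \<alpha>"
  have "a' > 0" "b' > 0" using assms g_fun_nonneg[OF a, of n] by (auto simp: a'_def b'_def)
  have \<mu>: "\<gamma> * g_incr n m \<theta> \<alpha> \<ge> 0" if "\<gamma> > 0" for \<gamma>
    using that g_incr_nonneg[OF a, of n m] by simp
  have integrable: "integrable lborel (\<lambda>\<gamma>. poisson_prob (\<gamma> * g_incr n m \<theta> \<alpha>) j * gamma_density a' b' \<gamma>)" for j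
    by (rule integrable_bounded_mult_gamma_density[OF \<open>a' > 0\<close> \<open>b' > 0\<close>])
      (use \<mu> poisson_prob_nonneg poisson_prob_le_1 in \<open>auto simp: abs_le_iff\<close>)
  have K: "cond_K a b \<alpha> \<theta> n m z j = (\<integral>\<gamma>. poisson_prob (\<gamma> * g_incr n m \<theta> \<alpha>) j * gamma_density a' b' \<gamma> \<partial>lborel)"
    for j unfolding a'_def b'_def by (rule cond_K_eq[OF assms(1-5)])
  have "0 \<le> poisson_prob (\<gamma> * g_incr n m \<theta> \<alpha>) j * gamma_density a' b' \<gamma>" for \<gamma> j
    by (cases "\<gamma> > 0") (simp_all add: \<mu> poisson_prob_nonneg gamma_density_nonneg[OF \<open>a' > 0\<close>])
  then have "cond_K a b \<alpha> \<theta> n m z j \<ge> 0" for j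
    unfolding K by (intro integral_nonneg_AE AE_I2)
  then have "cdf (cond_law_scaled a b \<alpha> \<theta> n m z c) x
      = (\<Sum>j | real j \<le> x * c. \<integral>\<gamma>. poisson_prob (\<gamma> * g_incr n m \<theta> \<alpha>) j * gamma_density a' b' \<gamma> \<partial>lborel)"
    by (simp add: cdf_cond_law_scaled[OF \<open>c > 0\<close>] K)
  also have "\<dots> = (\<integral>\<gamma>. poisson_cdf (\<gamma> * g_incr n m \<theta> \<alpha>) (x * c) * gamma_density a' b' \<gamma> \<partial>lborel)"
    by (subst Bochner_Integration.integral_sum[symmetric])
      (simp_all add: integrable poisson_cdf_def sum_distrib_right)
  finally show ?thesis by (simp add: a'_def b'_def)
qed

lemma tendsto_integral_poisson_cdf:
  assumes "a > 0" "b > 0" "L > 0" and D: "\<And>m. D m \<ge> 0"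
    and DL: "(\<lambda>m. D m / c m) \<longlonglongrightarrow> L" and c: "filterlim c at_top sequentially"
  shows "(\<lambda>m. \<integral>\<gamma>. poisson_cdf (\<gamma> * D m) (x * c m) * gamma_density a b \<gamma> \<partial>lborel)
      \<longlonglongrightarrow> (\<integral>\<gamma>. indicator {\<gamma>. \<gamma> * L \<le> x} \<gamma> * gamma_density a b \<gamma> \<partial>lborel)"
proof (rule integral_dominated_convergence[where w = "gamma_density a b"])
  have [measurable]: "{\<gamma>::real. \<gamma> * L \<le> x} \<in> sets borel" by measurable
  show "(\<lambda>\<gamma>. indicator {\<gamma>. \<gamma> * L \<le> x} \<gamma> * gamma_density a b \<gamma>) \<in> borel_measurable lborel"
    by measurable
  show "(\<lambda>\<gamma>. poisson_cdf (\<gamma> * D m) (x * c m) * gamma_density a b \<gamma>) \<in> borel_measurable lborel" for m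
    unfolding poisson_cdf_def by measurable
  show "integrable lborel (gamma_density a b)" by (rule integrable_gamma_density[OF assms(1,2)])
  show "AE \<gamma> in lborel. norm (poisson_cdf (\<gamma> * D m) (x * c m) * gamma_density a b \<gamma>) \<le> gamma_density a b \<gamma>"
    for m
  proof (rule AE_I2)
    fix \<gamma> :: real
    show "norm (poisson_cdf (\<gamma> * D m) (x * c m) * gamma_density a b \<gamma>) \<le> gamma_density a b \<gamma>"
    proof (cases "\<gamma> > 0")
      case True
      then have "\<gamma> * D m \<ge> 0" using D[of m] by simp
      then show ?thesis
        using poisson_cdf_nonneg poisson_cdf_le_1 gamma_density_nonneg[OF assms(1), of b \<gamma>]
        by (auto simp: abs_mult intro!: mult_left_le_one_le)
    qed simp
  qed
  show "AE \<gamma> in lborel. (\<lambda>m. poisson_cdf (\<gamma> * D m) (x * c m) * gamma_density a b \<gamma>)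
      \<longlonglongrightarrow> indicator {\<gamma>. \<gamma> * L \<le> x} \<gamma> * gamma_density a b \<gamma>"
    using AE_lborel_singleton[of "x / L"]
  proof eventually_elim
    case (elim \<gamma>)
    show ?case
    proof (cases "\<gamma> > 0")
      case True
      have "(\<lambda>m. \<gamma> * D m / c m) \<longlonglongrightarrow> \<gamma> * L"
        using tendsto_mult[OF tendsto_const DL] by (simp add: mult.assoc)
      then have "(\<lambda>m. poisson_cdf (\<gamma> * D m) (x * c m)) \<longlonglongrightarrow> (if \<gamma> * L \<le> x then 1 else 0)"
        by (rule tendsto_poisson_cdf[OF c]) (use True elim \<open>L > 0\<close> D in \<open>auto simp: field_simps\<close>)
      from tendsto_mult_right[OF this, of "gamma_density a b \<gamma>"] show ?thesis
        by (cases "\<gamma> * L \<le> x") (simp_all add: indicator_def)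
    qed simp
  qed
qed

lemma weak_conv_cond_law_scaled:
  assumes "a > 0" "b > 0" and a: "\<alpha> < 1" "\<theta> + \<alpha> > 0" and z: "\<forall>A\<in>#z. A \<noteq> {} \<and> A \<subseteq> {1..n}"
    and "L > 0" and lim: "(\<lambda>m. g_incr n m \<theta> \<alpha> / c m) \<longlonglongrightarrow> L" and c: "filterlim c at_top sequentially"
  shows "weak_conv_m (\<lambda>m. cond_law_scaled a b \<alpha> \<theta> n m z (c m))
           (gamma_measure (a + real (size z)) ((b + g_fun n \<theta> \<alpha>) / L))"
  unfolding weak_conv_m_def weak_conv_def
proof (intro allI impI)
  fix x
  define a' b' where "a' = a + real (size z)" and "b' = b + g_fun n \<theta> \<alpha>"
  have "a' > 0" "b' > 0" using assms g_fun_nonneg[OF a, of n] by (auto simp: a'_def b'_def)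
  have "(\<lambda>m. \<integral>\<gamma>. poisson_cdf (\<gamma> * g_incr n m \<theta> \<alpha>) (x * c m) * gamma_density a' b' \<gamma> \<partial>lborel)
      \<longlonglongrightarrow> cdf (gamma_measure a' (b' / L)) x"
    unfolding cdf_gamma_measure_scale[OF \<open>a' > 0\<close> \<open>b' > 0\<close> \<open>L > 0\<close>]
    by (rule tendsto_integral_poisson_cdf[OF \<open>a' > 0\<close> \<open>b' > 0\<close> \<open>L > 0\<close> g_incr_nonneg[OF a] lim c])
  moreover have "eventually (\<lambda>m. c m > 0) sequentially" using c filterlim_at_top_dense by blast
  then have "eventually (\<lambda>m. (\<integral>\<gamma>. poisson_cdf (\<gamma> * g_incr n m \<theta> \<alpha>) (x * c m) * gamma_density a' b' \<gamma> \<partial>lborel)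
       = cdf (cond_law_scaled a b \<alpha> \<theta> n m z (c m)) x) sequentially"
    by eventually_elim (simp add: cdf_cond_law_scaled_eq_integral[OF assms(1-5)] a'_def b'_def)
  ultimately show "(\<lambda>m. cdf (cond_law_scaled a b \<alpha> \<theta> n m z (c m)) x) \<longlonglongrightarrow> cdf (gamma_measure a' (b' / L)) x"
    by (rule Lim_transform_eventually)
qed

section \<open>Growth of the increments of \<open>g\<close>\<close>

lemma abs_diff_le_telescoping:
  fixes f g :: "nat \<Rightarrow> real"
  assumes "\<And>m. K \<le> m \<Longrightarrow> \<bar>f (Suc m) - f m\<bar> \<le> g (Suc m) - g m" and "K \<le> m"
  shows "\<bar>f m - f K\<bar> \<le> g m - g K"
  using assms(2)
proof (induction m rule: dec_induct)
  case (step m)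
  have "\<bar>f (Suc m) - f K\<bar> \<le> \<bar>f m - f K\<bar> + \<bar>f (Suc m) - f m\<bar>"
    using abs_triangle_ineq[of "f m - f K" "f (Suc m) - f m"] by simp
  then show ?case using step.IH assms(1)[OF step.hyps(1)] by linarith
qed simp

lemma Stolz_Cesaro:
  fixes a b :: "nat \<Rightarrow> real"
  assumes inc: "eventually (\<lambda>m. b m < b (Suc m)) sequentially"
    and b: "filterlim b at_top sequentially"
    and lim: "(\<lambda>m. (a (Suc m) - a m) / (b (Suc m) - b m)) \<longlonglongrightarrow> L"
  shows "(\<lambda>m. a m / b m) \<longlonglongrightarrow> L"
proof (rule LIMSEQ_I)
  fix \<epsilon> :: real assume "\<epsilon> > 0"
  have "eventually (\<lambda>m. b m < b (Suc m) \<and> b m > 0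
      \<and> \<bar>(a (Suc m) - a m) / (b (Suc m) - b m) - L\<bar> < \<epsilon> / 2) sequentially"
    using inc filterlim_at_top_dense[THEN iffD1, OF b, rule_format, of 0]
      tendstoD[OF lim half_gt_zero[OF \<open>\<epsilon> > 0\<close>]]
    by eventually_elim (simp add: dist_real_def)
  then obtain K where K: "\<And>m. K \<le> m \<Longrightarrow> b m < b (Suc m) \<and> b m > 0
      \<and> \<bar>(a (Suc m) - a m) / (b (Suc m) - b m) - L\<bar> < \<epsilon> / 2"
    unfolding eventually_sequentially by blast
  define r where "r m = a m - L * b m" for m
  have "\<bar>r (Suc m) - r m\<bar> \<le> \<epsilon> / 2 * b (Suc m) - \<epsilon> / 2 * b m" if "K \<le> m" for m
  proof -
    have pos: "b (Suc m) - b m > 0" using K[OF that] by simp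
    have "r (Suc m) - r m = ((a (Suc m) - a m) / (b (Suc m) - b m) - L) * (b (Suc m) - b m)"
      using pos by (simp add: r_def field_simps)
    then have "\<bar>r (Suc m) - r m\<bar> \<le> \<epsilon> / 2 * (b (Suc m) - b m)"
      using K[OF that] pos by (simp add: abs_mult)
    then show ?thesis by (simp add: algebra_simps)
  qed
  then have tele: "\<bar>r m - r K\<bar> \<le> \<epsilon> / 2 * b m - \<epsilon> / 2 * b K" if "K \<le> m" for m
    by (rule abs_diff_le_telescoping[where g = "\<lambda>m. \<epsilon> / 2 * b m"]) (use that in auto)
  obtain N where N: "\<And>m. N \<le> m \<Longrightarrow> b m > 2 * \<bar>r K\<bar> / \<epsilon>"
    using filterlim_at_top_dense[THEN iffD1, OF b, rule_format, of "2 * \<bar>r K\<bar> / \<epsilon>"]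
    unfolding eventually_sequentially by blast
  show "\<exists>no. \<forall>m\<ge>no. norm (a m / b m - L) < \<epsilon>"
  proof (intro exI allI impI)
    fix m assume "max K N \<le> m"
    then have "K \<le> m" "N \<le> m" by auto
    have "b K > 0" using K[of K] by simp
    have "\<bar>r K\<bar> < \<epsilon> / 2 * b m" using N[OF \<open>N \<le> m\<close>] \<open>\<epsilon> > 0\<close> by (simp add: field_simps)
    moreover have "\<bar>r m\<bar> \<le> \<bar>r K\<bar> + \<bar>r m - r K\<bar>" by linarith
    moreover have "\<epsilon> / 2 * b K > 0" using \<open>b K > 0\<close> \<open>\<epsilon> > 0\<close> by simp
    ultimately have "\<bar>r m\<bar> < \<epsilon> * b m" using tele[OF \<open>K \<le> m\<close>] by linarith
    moreover have "b m > 0" using K[OF \<open>K \<le> m\<close>] by simp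
    moreover have "a m / b m - L = r m / b m" using \<open>b m > 0\<close> by (simp add: r_def field_simps)
    ultimately show "norm (a m / b m - L) < \<epsilon>"
      by (simp add: abs_divide pos_divide_less_eq)
  qed
qed

lemma g_incr_Suc:
  "g_incr n (Suc m) \<theta> \<alpha> - g_incr n m \<theta> \<alpha> = pochhammer (\<theta> + \<alpha>) (n + m) / pochhammer (\<theta> + 1) (n + m)"
  unfolding g_incr_def by (simp add: g_fun_Suc)

lemma pochhammer_ratio_Suc:
  assumes "x > 0"
  shows "pochhammer x N / pochhammer (x + 1) N = x / (x + real N)"
proof -
  have "x * pochhammer (x + 1) N = pochhammer x N * (x + real N)"
    by (metis pochhammer_rec pochhammer_Suc of_nat_id)
  moreover have "pochhammer (x + 1) N > 0" "x + real N > 0" using assms by (auto intro: pochhammer_pos)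
  ultimately show ?thesis by (simp add: field_simps)
qed

lemma g_incr_asymp_ln:
  assumes "\<theta> > 0"
  shows "(\<lambda>m. g_incr n m \<theta> 0 / ln (real m)) \<longlonglongrightarrow> \<theta>"
proof (rule Stolz_Cesaro)
  show "eventually (\<lambda>m. ln (real m) < ln (real (Suc m))) sequentially"
    using eventually_gt_at_top[of 0] by eventually_elim simp
  show "filterlim (\<lambda>m. ln (real m)) at_top sequentially" by real_asymp
  have "g_incr n (Suc m) \<theta> 0 - g_incr n m \<theta> 0 = \<theta> / (\<theta> + real n + real m)" for m
    using pochhammer_ratio_Suc[OF assms, of "n + m"] by (simp add: g_incr_Suc add.assoc)
  moreover have "(\<lambda>m::nat. (\<theta> / (\<theta> + real n + real m)) / (ln (real (Suc m)) - ln (real m))) \<longlonglongrightarrow> \<theta>"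
    using assms by real_asymp
  ultimately show "(\<lambda>m. (g_incr n (Suc m) \<theta> 0 - g_incr n m \<theta> 0) / (ln (real (Suc m)) - ln (real m))) \<longlonglongrightarrow> \<theta>"
    by simp
qed

lemma Gamma_series_real_eq:
  "N > 0 \<Longrightarrow> Gamma_series (x::real) N = fact N * real N powr x / (pochhammer x N * (x + real N))"
  by (simp add: Gamma_series_def powr_def pochhammer_Suc mult.commute)

lemma pochhammer_ratio_eq_Gamma_series:
  fixes x y :: real
  assumes "x > 0" "y > 0" "N > 0"
  shows "pochhammer y N / pochhammer x N * real N powr (x - y)
           = Gamma_series x N / Gamma_series y N * ((x + real N) / (y + real N))"
proof -
  have cancel: "P / Q * (U / V) = (F * U / (Q * C)) / (F * V / (P * D)) * (C / D)"
    if "P > 0" "Q > 0" "C > 0" "D > 0" "F > 0" "U > 0" "V > 0" for P Q C D F U V :: real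
    using that by (simp add: field_simps)
  have "pochhammer y N > 0" "pochhammer x N > 0" "x + real N > 0" "y + real N > 0"
    "fact N > (0::real)" "real N powr x > 0" "real N powr y > 0"
    using assms by (auto intro!: pochhammer_pos)
  then show ?thesis
    unfolding Gamma_series_real_eq[OF assms(3)] powr_diff by (rule cancel)
qed

lemma tendsto_pochhammer_ratio:
  fixes x y :: real
  assumes "x > 0" "y > 0"
  shows "(\<lambda>N. pochhammer y N / pochhammer x N * real N powr (x - y)) \<longlonglongrightarrow> Gamma x / Gamma y"
proof -
  have "(\<lambda>N. Gamma_series x N / Gamma_series y N * ((x + real N) / (y + real N))) \<longlonglongrightarrow> Gamma x / Gamma y * 1"
  proof (intro tendsto_mult tendsto_divide Gamma_series_LIMSEQ)
    show "Gamma y \<noteq> 0" using Gamma_real_pos[OF assms(2)] by simp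
    show "(\<lambda>N. (x + real N) / (y + real N)) \<longlonglongrightarrow> 1" by real_asymp
  qed
  moreover have "eventually (\<lambda>N. Gamma_series x N / Gamma_series y N * ((x + real N) / (y + real N))
      = pochhammer y N / pochhammer x N * real N powr (x - y)) sequentially"
    using eventually_gt_at_top[of 0]
    by eventually_elim (rule pochhammer_ratio_eq_Gamma_series[OF assms, symmetric])
  ultimately show ?thesis by (simp add: Lim_transform_eventually)
qed

lemma g_incr_asymp_powr:
  assumes "\<alpha> > 0" "\<alpha> < 1" "\<theta> + \<alpha> > 0"
  shows "(\<lambda>m. g_incr n m \<theta> \<alpha> / real m powr \<alpha>) \<longlonglongrightarrow> Gamma (\<theta> + 1) / (\<alpha> * Gamma (\<theta> + \<alpha>))"
proof (rule Stolz_Cesaro)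
  show "eventually (\<lambda>m. real m powr \<alpha> < real (Suc m) powr \<alpha>) sequentially"
    using assms(1) by (intro always_eventually allI, cases "m = 0") (auto intro!: powr_less_mono2)
  show "filterlim (\<lambda>m. real m powr \<alpha>) at_top sequentially" using assms(1) by real_asymp
  define t where "t N = pochhammer (\<theta> + \<alpha>) N / pochhammer (\<theta> + 1) N * real N powr (1 - \<alpha>)" for N
  have "(\<lambda>N. t N) \<longlonglongrightarrow> Gamma (\<theta> + 1) / Gamma (\<theta> + \<alpha>)"
    using tendsto_pochhammer_ratio[of "\<theta> + 1" "\<theta> + \<alpha>"] assms by (simp add: t_def)
  then have "(\<lambda>m. t (m + n)) \<longlonglongrightarrow> Gamma (\<theta> + 1) / Gamma (\<theta> + \<alpha>)"
    by (rule LIMSEQ_ignore_initial_segment)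
  moreover have "(\<lambda>m::nat. (real n + real m) powr (\<alpha> - 1) / (real (Suc m) powr \<alpha> - real m powr \<alpha>)) \<longlonglongrightarrow> inverse \<alpha>"
    using assms by real_asymp
  ultimately have "(\<lambda>m. t (m + n) * ((real n + real m) powr (\<alpha> - 1) / (real (Suc m) powr \<alpha> - real m powr \<alpha>)))
      \<longlonglongrightarrow> Gamma (\<theta> + 1) / Gamma (\<theta> + \<alpha>) * inverse \<alpha>"
    by (rule tendsto_mult)
  moreover have "eventually (\<lambda>m. t (m + n) * ((real n + real m) powr (\<alpha> - 1) / (real (Suc m) powr \<alpha> - real m powr \<alpha>))
      = (g_incr n (Suc m) \<theta> \<alpha> - g_incr n m \<theta> \<alpha>) / (real (Suc m) powr \<alpha> - real m powr \<alpha>)) sequentially"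
    using eventually_gt_at_top[of 0]
  proof eventually_elim
    case (elim m)
    then have "real (m + n) powr (1 - \<alpha>) * (real n + real m) powr (\<alpha> - 1) = 1"
      by (simp add: powr_add[symmetric] add.commute)
    then show ?case unfolding g_incr_Suc t_def by (simp add: add.commute mult.assoc)
  qed
  ultimately show "(\<lambda>m. (g_incr n (Suc m) \<theta> \<alpha> - g_incr n m \<theta> \<alpha>) / (real (Suc m) powr \<alpha> - real m powr \<alpha>))
      \<longlonglongrightarrow> Gamma (\<theta> + 1) / (\<alpha> * Gamma (\<theta> + \<alpha>))"
    by (simp add: Lim_transform_eventually field_simps)
qed

section \<open>Limit laws\<close>

lemma cond_law_scaled_limit:
  assumes "a > 0" "b > 0" and a: "\<alpha> < 1" "\<theta> + \<alpha> > 0" and z: "\<forall>A\<in>#z. A \<noteq> {} \<and> A \<subseteq> {1..n}"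
    and "L > 0" and "(\<lambda>m. g_incr n m \<theta> \<alpha> / c m) \<longlonglongrightarrow> L" and "filterlim c at_top sequentially"
  shows "weak_conv_m (\<lambda>m. cond_law_scaled a b \<alpha> \<theta> n m z (c m))
           (gamma_measure (a + real (size z)) ((b + g_fun n \<theta> \<alpha>) / L))
    \<and> distr (posterior a b \<alpha> \<theta> n z) borel (\<lambda>\<gamma>. \<gamma> * L)
        = gamma_measure (a + real (size z)) ((b + g_fun n \<theta> \<alpha>) / L)"
proof
  show "weak_conv_m (\<lambda>m. cond_law_scaled a b \<alpha> \<theta> n m z (c m))
           (gamma_measure (a + real (size z)) ((b + g_fun n \<theta> \<alpha>) / L))"
    by (rule weak_conv_cond_law_scaled) fact+
  have "b + g_fun n \<theta> \<alpha> > 0" using assms g_fun_nonneg[OF a, of n] by simp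
  then show "distr (posterior a b \<alpha> \<theta> n z) borel (\<lambda>\<gamma>. \<gamma> * L)
        = gamma_measure (a + real (size z)) ((b + g_fun n \<theta> \<alpha>) / L)"
    unfolding posterior_eq_gamma_measure[OF assms(1-4)] using assms
    by (intro distr_gamma_measure_scale) auto
qed

lemma cond_law_scaled_limit_ln:
  assumes "a > 0" "b > 0" "\<theta> > 0" and z: "\<forall>A\<in>#z. A \<noteq> {} \<and> A \<subseteq> {1..n}"
  shows "weak_conv_m (\<lambda>m. cond_law_scaled a b 0 \<theta> n m z (ln (real m)))
           (gamma_measure (a + real (size z)) ((b + g_fun n \<theta> 0) / \<theta>))
    \<and> distr (posterior a b 0 \<theta> n z) borel (\<lambda>\<gamma>. \<gamma> * \<theta>)
        = gamma_measure (a + real (size z)) ((b + g_fun n \<theta> 0) / \<theta>)"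
proof (rule cond_law_scaled_limit)
  show "(\<lambda>m. g_incr n m \<theta> 0 / ln (real m)) \<longlonglongrightarrow> \<theta>" by (rule g_incr_asymp_ln) fact
  show "filterlim (\<lambda>m. ln (real m)) at_top sequentially" by real_asymp
qed (use assms in auto)

lemma cond_law_scaled_limit_powr:
  assumes "a > 0" "b > 0" "0 < \<alpha>" "\<alpha> < 1" "\<theta> + \<alpha> > 0" and z: "\<forall>A\<in>#z. A \<noteq> {} \<and> A \<subseteq> {1..n}"
  shows "weak_conv_m (\<lambda>m. cond_law_scaled a b \<alpha> \<theta> n m z (real m powr \<alpha>))
           (gamma_measure (a + real (size z)) ((b + g_fun n \<theta> \<alpha>) * (\<alpha> * Gamma (\<theta> + \<alpha>) / Gamma (\<theta> + 1))))
    \<and> distr (posterior a b \<alpha> \<theta> n z) borel (\<lambda>\<gamma>. \<gamma> * Gamma (\<theta> + 1) / (\<alpha> * Gamma (\<theta> + \<alpha>)))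
        = gamma_measure (a + real (size z)) ((b + g_fun n \<theta> \<alpha>) * (\<alpha> * Gamma (\<theta> + \<alpha>) / Gamma (\<theta> + 1)))"
proof -
  define L where "L = Gamma (\<theta> + 1) / (\<alpha> * Gamma (\<theta> + \<alpha>))"
  have "L > 0" unfolding L_def using assms by (auto intro!: divide_pos_pos Gamma_real_pos)
  have "weak_conv_m (\<lambda>m. cond_law_scaled a b \<alpha> \<theta> n m z (real m powr \<alpha>))
           (gamma_measure (a + real (size z)) ((b + g_fun n \<theta> \<alpha>) / L))
    \<and> distr (posterior a b \<alpha> \<theta> n z) borel (\<lambda>\<gamma>. \<gamma> * L)
        = gamma_measure (a + real (size z)) ((b + g_fun n \<theta> \<alpha>) / L)"
  proof (rule cond_law_scaled_limit)
    show "(\<lambda>m. g_incr n m \<theta> \<alpha> / real m powr \<alpha>) \<longlonglongrightarrow> L"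
      unfolding L_def using assms by (intro g_incr_asymp_powr)
    show "filterlim (\<lambda>m. real m powr \<alpha>) at_top sequentially" using assms by real_asymp
  qed (use assms \<open>L > 0\<close> in auto)
  then show ?thesis by (simp add: L_def)
qed

theorem proposition5:
  fixes a b \<alpha> \<theta> :: real and n :: nat and z :: "nat set multiset"
  assumes "a > 0" and "b > 0" and "0 \<le> \<alpha>" and "\<alpha> < 1" and "\<theta> > - \<alpha>"
    and "\<forall>B\<in>#z. B \<noteq> {} \<and> B \<subseteq> {1..n}"
  shows "posterior a b \<alpha> \<theta> n z = gamma_measure (a + real (size z)) (b + g_fun n \<theta> \<alpha>)
    \<and> (\<alpha> = 0 \<longrightarrow>
           weak_conv_m (\<lambda>m. cond_law_scaled a b \<alpha> \<theta> n m z (ln (real m)))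
             (gamma_measure (a + real (size z)) ((b + g_fun n \<theta> 0) / \<theta>))
         \<and> distr (posterior a b \<alpha> \<theta> n z) borel (\<lambda>\<gamma>. \<gamma> * \<theta>)
             = gamma_measure (a + real (size z)) ((b + g_fun n \<theta> 0) / \<theta>))
    \<and> (0 < \<alpha> \<longrightarrow>
           weak_conv_m (\<lambda>m. cond_law_scaled a b \<alpha> \<theta> n m z (real m powr \<alpha>))
             (gamma_measure (a + real (size z))
                ((b + g_fun n \<theta> \<alpha>) * (\<alpha> * Gamma (\<theta> + \<alpha>) / Gamma (\<theta> + 1))))
         \<and> distr (posterior a b \<alpha> \<theta> n z) borel (\<lambda>\<gamma>. \<gamma> * Gamma (\<theta> + 1) / (\<alpha> * Gamma (\<theta> + \<alpha>)))
             = gamma_measure (a + real (size z))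
                ((b + g_fun n \<theta> \<alpha>) * (\<alpha> * Gamma (\<theta> + \<alpha>) / Gamma (\<theta> + 1))))"
proof -
  have "\<theta> + \<alpha> > 0" using assms by simp
  then show ?thesis
    using posterior_eq_gamma_measure[OF assms(1,2,4)] cond_law_scaled_limit_ln[OF assms(1,2) _ assms(6)]
      cond_law_scaled_limit_powr[OF assms(1,2) _ assms(4) _ assms(6)]
    by auto
qed

end
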